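(* Let $m$ be a positive integer, let $S=\mathbb{Q}[t^{\pm1}]/((t^2-3t+1)^m)$ viewed as an abelian group, and let $\Gamma_1=S\rtimes\langle\mu\rangle$, where $\mu$ generates an infinite cyclic group acting on $S$ by multiplication by $t$ (i.e.\ $\mu^{-1}s\mu=st$). Let $\mathcal{R}_1=(\mathbb{Q}\Gamma_1)(\mathbb{Q}[\Gamma_1,\Gamma_1]\setminus\{0\})^{-1}$ be the Ore localization. Then the ring $\mathcal{R}_1$ is simple, i.e.\ it has no two-sided ideals other than $0$ and $\mathcal{R}_1$.
   Context: $\mathcal{R}_1$ is isomorphic to the skew Laurent polynomial ring $\mathbb{K}_1[\mu^{\pm1}]$, where $\mathbb{K}_1$ is the (commutative) quotient field of $\mathbb{Z}[S]$, with $a\mu=\mu\alpha(a)$ for the automorphism $\alpha$ of $\mathbb{K}_1$ induced by multiplication by $t$ on $S$. *)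

theory Defs
  imports "HOL-Computational_Algebra.Polynomial" "HOL-Algebra.Generated_Groups" "HOL-Algebra.Ideal"
begin

text \<open>Since t^2-3t+1 has constant term 1, t is a unit modulo (t^2-3t+1)^m, hence
  Q[t^{+-1}]/((t^2-3t+1)^m) = Q[t]/((t^2-3t+1)^m).  We represent residue classes by their
  reduced representatives (polynomials of degree < 2m).\<close>

definition qpoly :: "nat \<Rightarrow> rat poly" where
  "qpoly m = [:1, -3, 1:] ^ m"

text \<open>An inverse of t modulo qpoly m: qpoly m - 1 = t * r, so t * (-r) = 1 - qpoly m.\<close>
definition tinv :: "nat \<Rightarrow> rat poly" where
  "tinv m = - ((qpoly m - 1) div [:0, 1:])"

definition tpow :: "nat \<Rightarrow> int \<Rightarrow> rat poly \<Rightarrow> rat poly" where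
  "tpow m k s = (s * (if 0 \<le> k then [:0, 1:] ^ nat k else tinv m ^ nat (- k))) mod qpoly m"

definition S_car :: "nat \<Rightarrow> rat poly set" where
  "S_car m = {s. s mod qpoly m = s}"

text \<open>The pair (s, n) stands for the element s * mu^n.  Then mu^n s = (s t^{-n}) mu^n, so
  (s1 mu^n1)(s2 mu^n2) = (s1 + s2 t^{-n1}) mu^(n1+n2).\<close>
definition Gamma1 :: "nat \<Rightarrow> (rat poly \<times> int) monoid" where
  "Gamma1 m = \<lparr> carrier = S_car m \<times> UNIV,
      mult = (\<lambda>(s1, n1) (s2, n2). (s1 + tpow m (- n1) s2, n1 + n2)),
      one = (0, 0) \<rparr>"

definition supp :: "('g \<Rightarrow> rat) \<Rightarrow> 'g set" where
  "supp f = {x. f x \<noteq> 0}"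

definition group_ring :: "('g, 'm) monoid_scheme \<Rightarrow> ('g \<Rightarrow> rat) ring" where
  "group_ring G = \<lparr> carrier = {f. finite (supp f) \<and> supp f \<subseteq> carrier G},
      mult = (\<lambda>f g x. \<Sum>(y, z) \<in> {(y, z). y \<in> supp f \<and> z \<in> supp g \<and> y \<otimes>\<^bsub>G\<^esub> z = x}. f y * g z),
      one = (\<lambda>x. if x = \<one>\<^bsub>G\<^esub> then 1 else 0),
      zero = (\<lambda>x. 0),
      add = (\<lambda>f g x. f x + g x) \<rparr>"

definition sub_group_ring :: "('g, 'm) monoid_scheme \<Rightarrow> 'g set \<Rightarrow> ('g \<Rightarrow> rat) set" where
  "sub_group_ring G H = {f \<in> carrier (group_ring G). supp f \<subseteq> H}"

text \<open>(R, phi) is a right ring of fractions of A with respect to T (Lam, Lectures on Modules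
  and Rings, Def. 10.1): phi(T) consists of units, every element of R has the form
  phi(a) phi(t)^{-1}, and ker phi = {a. a t = 0 for some t in T}.\<close>
definition right_ring_of_fractions ::
    "('a, 'c) ring_scheme \<Rightarrow> 'a set \<Rightarrow> ('b, 'd) ring_scheme \<Rightarrow> ('a \<Rightarrow> 'b) \<Rightarrow> bool" where
  "right_ring_of_fractions A T R \<phi> \<longleftrightarrow>
     ring R \<and> \<phi> \<in> ring_hom A R \<and>
     (\<forall>t\<in>T. \<phi> t \<in> Units R) \<and>
     (\<forall>r\<in>carrier R. \<exists>a\<in>carrier A. \<exists>t\<in>T. r = \<phi> a \<otimes>\<^bsub>R\<^esub> inv\<^bsub>R\<^esub> (\<phi> t)) \<and>
     (\<forall>a\<in>carrier A. \<phi> a = \<zero>\<^bsub>R\<^esub> \<longleftrightarrow> (\<exists>t\<in>T. a \<otimes>\<^bsub>A\<^esub> t = \<zero>\<^bsub>A\<^esub>))"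

definition simple_ring :: "('b, 'd) ring_scheme \<Rightarrow> bool" where
  "simple_ring R \<longleftrightarrow> ring R \<and> \<zero>\<^bsub>R\<^esub> \<noteq> \<one>\<^bsub>R\<^esub> \<and>
     (\<forall>I. ideal I R \<longrightarrow> I = {\<zero>\<^bsub>R\<^esub>} \<or> I = carrier R)"

definition QGamma1 :: "nat \<Rightarrow> (rat poly \<times> int \<Rightarrow> rat) ring" where
  "QGamma1 m = group_ring (Gamma1 m)"

definition T1 :: "nat \<Rightarrow> (rat poly \<times> int \<Rightarrow> rat) set" where
  "T1 m = sub_group_ring (Gamma1 m) (derived (Gamma1 m) (carrier (Gamma1 m))) - {\<lambda>x. 0}"

end

theory Submission
  imports Defs "HOL-Library.Poly_Mapping" "HOL-Computational_Algebra.Fraction_Field"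
    "HOL-Library.Function_Algebras" "HOL-Algebra.Weak_Morphisms"
begin

text \<open>\<open>\<rat>\<Gamma>\<^sub>1\<close> acts faithfully on sequences \<open>v : \<int> \<Rightarrow> \<K>\<close>, where \<open>\<K>\<close> is the fraction field of the group
  algebra of \<open>(rat poly, +)\<close>: the element \<open>s \<mu>\<^sup>n\<close> acts by \<open>v \<mapsto> (j \<mapsto> [t\<^sup>j s] \<cdot> v (j - n))\<close>. As \<open>t - 1\<close>
  is a unit modulo \<open>(t\<^sup>2 - 3t + 1)\<^sup>m\<close>, the commutator subgroup is \<open>S\<close>, so the denominators act by invertible
  diagonal operators, and the operators \<open>\<Sum> c\<^sub>n \<mu>\<^sup>n\<close> whose coefficients are quotients of such diagonals form
  a right ring of fractions, the skew Laurent ring \<open>\<K>\<^sub>1[\<mu>\<^sup>\<plusminus>\<^sup>1]\<close>.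

  A nonzero ideal of any right ring of fractions contains \<open>\<phi> a\<close> for some \<open>a \<noteq> 0\<close>; induct on the number of
  \<open>\<mu>\<close>-degrees of \<open>a\<close>. After shifting one degree to \<open>0\<close>, the difference between \<open>a\<close> and its conjugate by
  \<open>1 \<in> S\<close> lies in the ideal and has fewer degrees, as the degree-\<open>0\<close> part cancels. If it vanishes, the
  support of \<open>a\<close> in each degree \<open>n \<noteq> 0\<close> is a finite set invariant under translation by \<open>t\<^sup>-\<^sup>n - 1 \<noteq> 0\<close>
  (\<open>t\<close> has infinite order modulo \<open>t\<^sup>2 - 3t + 1\<close>), hence empty; then \<open>a \<in> \<rat>[S] - 0\<close> and \<open>\<phi> a\<close> is a unit.\<close>

section \<open>Multiplication by powers of \<open>t\<close> on \<open>S\<close>\<close>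

definition tunit :: "nat \<Rightarrow> int \<Rightarrow> rat poly" where
  "tunit m k = (if 0 \<le> k then [:0, 1:] ^ nat k else tinv m ^ nat (- k))"

lemma tpow_eq: "tpow m k s = (s * tunit m k) mod qpoly m"
  by (simp add: tpow_def tunit_def)

lemma X_mult_tinv: "[:0, 1:] * tinv m = 1 - qpoly m"
proof -
  have "poly (qpoly m - 1) 0 = 0"
    by (simp add: qpoly_def poly_power)
  then have "[:0, 1:] dvd qpoly m - 1"
    using dvd_iff_poly_eq_0[of 0 "qpoly m - 1"] by simp
  then show ?thesis
    unfolding tinv_def by (simp only: mult_minus_right dvd_mult_div_cancel minus_diff_eq)
qed

lemma X_pow_mult_tinv_pow_mod:
  "([:0, 1:] ^ i * tinv m ^ j) mod qpoly m = tunit m (int i - int j) mod qpoly m"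
proof (induction j arbitrary: i)
  case 0
  then show ?case by (simp add: tunit_def)
next
  case (Suc j)
  show ?case
  proof (cases i)
    case 0
    have "tunit m (int 0 - int (Suc j)) = tinv m ^ Suc j"
      by (simp add: tunit_def del: of_nat_Suc)
    then show ?thesis by (simp add: 0)
  next
    case (Suc i')
    have "[:0, 1:] ^ i * tinv m ^ Suc j = ([:0, 1:] * tinv m) * ([:0, 1:] ^ i' * tinv m ^ j)"
      by (simp add: Suc algebra_simps)
    also have "\<dots> = [:0, 1:] ^ i' * tinv m ^ j - qpoly m * ([:0, 1:] ^ i' * tinv m ^ j)"
      unfolding X_mult_tinv by (simp only: left_diff_distrib mult_1_left)
    finally show ?thesis
      using Suc.IH[of i'] by (simp add: Suc poly_mod_diff_left)
  qed
qed

lemma tunit_mult_mod: "(tunit m a * tunit m b) mod qpoly m = tunit m (a + b) mod qpoly m"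
proof -
  have "tunit m a * tunit m b = [:0, 1:] ^ (nat a + nat b) * tinv m ^ (nat (- a) + nat (- b))"
    by (simp add: tunit_def power_add)
  also have "\<dots> mod qpoly m
      = tunit m (int (nat a + nat b) - int (nat (- a) + nat (- b))) mod qpoly m"
    by (rule X_pow_mult_tinv_pow_mod)
  also have "int (nat a + nat b) - int (nat (- a) + nat (- b)) = a + b"
    by simp
  finally show ?thesis .
qed

lemma tpow_tpow: "tpow m a (tpow m b s) = tpow m (a + b) s"
proof -
  have "tpow m a (tpow m b s) = (s * (tunit m b * tunit m a)) mod qpoly m"
    by (simp add: tpow_eq mod_mult_left_eq mult.assoc)
  also have "\<dots> = tpow m (a + b) s"
    by (metis tpow_eq mod_mult_right_eq tunit_mult_mod add.commute)
  finally show ?thesis .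
qed

lemma tpow_in_S_car: "tpow m k s \<in> S_car m"
  by (simp add: tpow_def S_car_def)

lemma S_car_zero: "0 \<in> S_car m"
  by (simp add: S_car_def)

lemma S_car_one: "0 < m \<Longrightarrow> 1 \<in> S_car m"
  by (simp add: S_car_def mod_poly_less qpoly_def degree_power_eq)

lemma S_car_add: "x \<in> S_car m \<Longrightarrow> y \<in> S_car m \<Longrightarrow> x + y \<in> S_car m"
  by (simp add: S_car_def poly_mod_add_left)

lemma S_car_uminus: "x \<in> S_car m \<Longrightarrow> - x \<in> S_car m"
  by (simp add: S_car_def)

lemma tpow_0: "s \<in> S_car m \<Longrightarrow> tpow m 0 s = s"
  by (simp add: tpow_eq tunit_def S_car_def)

lemma tpow_add: "tpow m k (x + y) = tpow m k x + tpow m k y"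
  by (simp add: tpow_eq distrib_right poly_mod_add_left)

lemma tpow_uminus: "tpow m k (- x) = - tpow m k x"
  by (simp add: tpow_eq)

lemma tpow_zero: "tpow m k 0 = 0"
  by (simp add: tpow_eq)

lemma tpow_inj: "s \<in> S_car m \<Longrightarrow> s' \<in> S_car m \<Longrightarrow> tpow m k s = tpow m k s' \<Longrightarrow> s = s'"
  by (metis add.left_inverse tpow_0 tpow_tpow)

text \<open>\<open>(t - 1)(t - 2) = 1 + (t\<^sup>2 - 3t + 1)\<close>, so \<open>t - 1\<close> is a unit modulo \<open>(t\<^sup>2 - 3t + 1)\<^sup>m\<close>.\<close>

lemma X_minus_one_invertible_mod: "\<exists>v. (([:0, 1:] - 1) * v) mod qpoly m = 1 mod qpoly m"
proof -
  define q :: "rat poly" where "q = [:1, -3, 1:]"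
  define w where "w = [:-2, 1:] * (\<Sum>i<m. (- q) ^ i)"
  have "([:0, 1:] - 1) * [:-2, 1:] = 1 - (- q)"
    by (simp add: q_def one_pCons)
  then have "([:0, 1:] - 1) * w = (1 - (- q)) * (\<Sum>i<m. (- q) ^ i)"
    by (simp only: w_def mult.assoc[symmetric])
  also have "\<dots> = 1 - (- q) ^ m"
    by (rule one_diff_power_eq[symmetric])
  also have "(- q) ^ m = (- 1) ^ m * qpoly m"
    unfolding power_minus[of q] by (simp only: q_def qpoly_def)
  finally have "(([:0, 1:] - 1) * w) mod qpoly m = (1 - (- 1) ^ m * qpoly m) mod qpoly m"
    by (rule arg_cong)
  then show ?thesis
    by (auto simp add: poly_mod_diff_left)
qed

lemma exists_sub_tpow_eq:
  assumes s: "s \<in> S_car m"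
  shows "\<exists>u\<in>S_car m. u - tpow m (-1) u = s"
proof -
  define X :: "rat poly" where "X = [:0, 1:]"
  define Q where "Q = qpoly m"
  obtain v where v: "((X - 1) * v) mod Q = 1 mod Q"
    using X_minus_one_invertible_mod unfolding X_def Q_def by blast
  define u where "u = (s * X * v) mod Q"
  have u: "u \<in> S_car m"
    by (simp add: u_def S_car_def Q_def)
  have "s * X * v * (1 - tinv m) = s * v * (X - X * tinv m)"
    by (simp only: algebra_simps)
  also have "X * tinv m = 1 - Q"
    unfolding X_def Q_def by (rule X_mult_tinv)
  also have "s * v * (X - (1 - Q)) = s * ((X - 1) * v) + (s * v) * Q"
    by (simp add: algebra_simps)
  finally have "(u * (1 - tinv m)) mod Q = (s * ((X - 1) * v)) mod Q"
    unfolding u_def mod_mult_left_eq by simp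
  also have "\<dots> = (s * (1 mod Q)) mod Q"
    by (metis mod_mult_right_eq v)
  also have "\<dots> = s"
    using s by (simp add: S_car_def Q_def mod_mult_right_eq)
  finally have "(u - u * tinv m) mod Q = s"
    by (simp only: right_diff_distrib mult_1_right)
  moreover have "tpow m (-1) u = (u * tinv m) mod Q"
    by (simp add: tpow_eq tunit_def Q_def)
  ultimately have "u - tpow m (-1) u = s"
    using u by (simp add: S_car_def Q_def poly_mod_diff_left)
  with u show ?thesis by blast
qed

text \<open>\<open>t\<^sup>k \<equiv> a\<^sub>k t + b\<^sub>k\<close> modulo \<open>t\<^sup>2 - 3t + 1\<close>, where \<open>(a\<^sub>k, b\<^sub>k) = X_pow_mod_coeffs k\<close>; the \<open>a\<^sub>k\<close>
  (Fibonacci numbers of even index) grow strictly, so \<open>t\<close> has infinite order modulo \<open>qpoly m\<close>.\<close>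

fun X_pow_mod_coeffs :: "nat \<Rightarrow> rat \<times> rat" where
  "X_pow_mod_coeffs 0 = (0, 1)"
| "X_pow_mod_coeffs (Suc k) =
    (3 * fst (X_pow_mod_coeffs k) + snd (X_pow_mod_coeffs k), - fst (X_pow_mod_coeffs k))"

lemma X_pow_mod_coeffs_strict_mono:
  "0 \<le> fst (X_pow_mod_coeffs k) \<and> fst (X_pow_mod_coeffs k) < fst (X_pow_mod_coeffs (Suc k))"
  by (induction k) auto

lemma X_pow_mod_q1:
  "[:0, 1:] ^ k mod [:1, -3, 1 :: rat:] = [:snd (X_pow_mod_coeffs k), fst (X_pow_mod_coeffs k):]"
proof (induction k)
  case 0
  then show ?case by (simp add: one_pCons[symmetric] mod_poly_less)
next
  case (Suc k)
  obtain a b where ab: "X_pow_mod_coeffs k = (a, b)"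
    by fastforce
  have "[:0, 1:] ^ Suc k mod [:1, -3, 1 :: rat:] = ([:0, 1:] * [:b, a:]) mod [:1, -3, 1:]"
    by (metis Suc.IH ab fst_conv mod_mult_right_eq power_Suc snd_conv)
  also have "[:0, 1:] * [:b, a:] = [:-a, 3 * a + b:] + smult a [:1, -3, 1 :: rat:]"
    by simp
  also have "\<dots> mod [:1, -3, 1:] = [:-a, 3 * a + b:] mod [:1, -3, 1:]"
    by (metis mod_mult_self1 mult_smult_left mult_1_left)
  also have "\<dots> = [:-a, 3 * a + b:]"
    by (rule mod_poly_less) simp
  finally show ?case
    using ab by simp
qed

lemma X_pow_mod_qpoly_neq_one:
  assumes "0 < m" "0 < k"
  shows "[:0, 1:] ^ k mod qpoly m \<noteq> 1 mod qpoly m"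
proof
  assume "[:0, 1:] ^ k mod qpoly m = 1 mod qpoly m"
  moreover have "[:1, -3, 1 :: rat:] dvd qpoly m"
    using assms(1) by (simp add: qpoly_def dvd_power)
  ultimately have "[:0, 1:] ^ k mod [:1, -3, 1 :: rat:] = 1 mod [:1, -3, 1:]"
    by (meson dvd_trans mod_eq_dvd_iff)
  then have "fst (X_pow_mod_coeffs k) = 0"
    by (simp add: X_pow_mod_q1 mod_poly_less one_pCons)
  moreover have "0 < fst (X_pow_mod_coeffs k)"
    using X_pow_mod_coeffs_strict_mono[of "k - 1"] assms(2) by simp
  ultimately show False
    by simp
qed

lemma tpow_one_neq_one:
  assumes m: "0 < m" and k: "k \<noteq> 0"
  shows "tpow m k 1 \<noteq> 1"
proof
  have pos: "tpow m (int n) 1 \<noteq> 1" if "0 < n" for n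
    using X_pow_mod_qpoly_neq_one[OF m that] S_car_one[OF m]
    by (simp add: tpow_eq tunit_def S_car_def)
  assume "tpow m k 1 = 1"
  then have "tpow m (- k) 1 = 1"
    using tpow_tpow[of m "- k" k 1] tpow_0[OF S_car_one[OF m]] by simp
  then show False
    using pos[of "nat k"] pos[of "nat (- k)"] \<open>tpow m k 1 = 1\<close> k by (cases "0 < k") auto
qed

section \<open>The group \<open>\<Gamma>\<^sub>1\<close> and its commutator subgroup\<close>

lemma carrier_Gamma1 [simp]: "carrier (Gamma1 m) = S_car m \<times> UNIV"
  by (simp add: Gamma1_def)

lemma mult_Gamma1 [simp]:
  "(s1, n1) \<otimes>\<^bsub>Gamma1 m\<^esub> (s2, n2) = (s1 + tpow m (- n1) s2, n1 + n2)"
  by (simp add: Gamma1_def)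

lemma one_Gamma1 [simp]: "\<one>\<^bsub>Gamma1 m\<^esub> = (0, 0)"
  by (simp add: Gamma1_def)

lemma group_Gamma1: "group (Gamma1 m)"
proof (rule groupI)
  fix x y z
  assume "x \<in> carrier (Gamma1 m)" "y \<in> carrier (Gamma1 m)" "z \<in> carrier (Gamma1 m)"
  then show "x \<otimes>\<^bsub>Gamma1 m\<^esub> y \<otimes>\<^bsub>Gamma1 m\<^esub> z = x \<otimes>\<^bsub>Gamma1 m\<^esub> (y \<otimes>\<^bsub>Gamma1 m\<^esub> z)"
    by (cases x, cases y, cases z) (simp add: tpow_add tpow_tpow add.assoc)
next
  fix x
  assume "x \<in> carrier (Gamma1 m)"
  then obtain s n where x: "x = (s, n)" "s \<in> S_car m"
    by auto
  then show "\<exists>y\<in>carrier (Gamma1 m). y \<otimes>\<^bsub>Gamma1 m\<^esub> x = \<one>\<^bsub>Gamma1 m\<^esub>"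
    by (intro bexI[of _ "(- tpow m n s, - n)"]) (simp_all add: tpow_tpow tpow_0 S_car_uminus tpow_in_S_car)
qed (auto simp: S_car_add S_car_zero tpow_in_S_car tpow_0)

lemma inv_Gamma1:
  assumes "s \<in> S_car m"
  shows "inv\<^bsub>Gamma1 m\<^esub> (s, n) = (- tpow m n s, - n)"
  by (rule group.inv_equality[OF group_Gamma1])
    (simp_all add: assms tpow_tpow tpow_0 S_car_uminus tpow_in_S_car)

lemma derived_Gamma1: "derived (Gamma1 m) (carrier (Gamma1 m)) = S_car m \<times> {0}"
proof
  have "derived_set (Gamma1 m) (carrier (Gamma1 m)) \<subseteq> S_car m \<times> {0}"
    by (auto simp: inv_Gamma1 S_car_add S_car_uminus tpow_in_S_car)
  moreover have "subgroup (S_car m \<times> {0}) (Gamma1 m)"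
    by (rule group.subgroupI[OF group_Gamma1])
      (use S_car_zero in \<open>auto simp: inv_Gamma1 S_car_uminus S_car_add tpow_in_S_car tpow_0\<close>)
  ultimately show "derived (Gamma1 m) (carrier (Gamma1 m)) \<subseteq> S_car m \<times> {0}"
    unfolding derived_def by (rule group.generate_subgroup_incl[OF group_Gamma1])
next
  show "S_car m \<times> {0} \<subseteq> derived (Gamma1 m) (carrier (Gamma1 m))"
  proof clarify
    fix s
    assume "s \<in> S_car m"
    then obtain u where u: "u \<in> S_car m" "u - tpow m (-1) u = s"
      using exists_sub_tpow_eq by blast
    have "(s, 0) = (u, 0) \<otimes>\<^bsub>Gamma1 m\<^esub> (0, 1) \<otimes>\<^bsub>Gamma1 m\<^esub> inv\<^bsub>Gamma1 m\<^esub> (u, 0)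
        \<otimes>\<^bsub>Gamma1 m\<^esub> inv\<^bsub>Gamma1 m\<^esub> (0, 1)"
      using u by (simp add: inv_Gamma1 S_car_zero tpow_zero tpow_0 tpow_uminus)
    moreover have "(u, 0) \<in> carrier (Gamma1 m)" "(0, 1) \<in> carrier (Gamma1 m)"
      using u S_car_zero by auto
    ultimately have "(s, 0) \<in> derived_set (Gamma1 m) (carrier (Gamma1 m))"
      by blast
    then show "(s, 0) \<in> derived (Gamma1 m) (carrier (Gamma1 m))"
      unfolding derived_def by (rule generate.incl)
  qed
qed

section \<open>Group rings\<close>

definition delta :: "'g \<Rightarrow> 'g \<Rightarrow> rat" where
  "delta g = (\<lambda>x. if x = g then 1 else 0)"

lemma supp_delta [simp]: "supp (delta g) = {g}"
  by (auto simp: supp_def delta_def)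

lemma supp_zero [simp]: "supp (\<lambda>x. 0) = {}"
  by (simp add: supp_def)

lemma carrier_group_ring: "f \<in> carrier (group_ring G) \<longleftrightarrow> finite (supp f) \<and> supp f \<subseteq> carrier G"
  by (simp add: group_ring_def)

lemma mult_group_ring: "f \<otimes>\<^bsub>group_ring G\<^esub> g =
    (\<lambda>x. \<Sum>(y, z) \<in> {(y, z). y \<in> supp f \<and> z \<in> supp g \<and> y \<otimes>\<^bsub>G\<^esub> z = x}. f y * g z)"
  by (simp add: group_ring_def)

lemma add_group_ring: "f \<oplus>\<^bsub>group_ring G\<^esub> g = (\<lambda>x. f x + g x)"
  by (simp add: group_ring_def)

lemma one_group_ring: "\<one>\<^bsub>group_ring G\<^esub> = delta \<one>\<^bsub>G\<^esub>"
  by (simp add: group_ring_def delta_def)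

lemma zero_group_ring: "\<zero>\<^bsub>group_ring G\<^esub> = (\<lambda>x. 0)"
  by (simp add: group_ring_def)

lemma supp_mult_group_ring:
  "supp (f \<otimes>\<^bsub>group_ring G\<^esub> g) \<subseteq> (\<lambda>(y, z). y \<otimes>\<^bsub>G\<^esub> z) ` (supp f \<times> supp g)"
proof
  fix x
  assume x: "x \<in> supp (f \<otimes>\<^bsub>group_ring G\<^esub> g)"
  show "x \<in> (\<lambda>(y, z). y \<otimes>\<^bsub>G\<^esub> z) ` (supp f \<times> supp g)"
  proof (rule ccontr)
    assume "x \<notin> (\<lambda>(y, z). y \<otimes>\<^bsub>G\<^esub> z) ` (supp f \<times> supp g)"
    then have "{(y, z). y \<in> supp f \<and> z \<in> supp g \<and> y \<otimes>\<^bsub>G\<^esub> z = x} = {}"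
      by auto
    then have "(f \<otimes>\<^bsub>group_ring G\<^esub> g) x = 0"
      by (simp only: mult_group_ring sum.empty)
    then show False
      using x by (simp add: supp_def)
  qed
qed

lemma group_ring_mult_closed:
  assumes "monoid G" "f \<in> carrier (group_ring G)" "g \<in> carrier (group_ring G)"
  shows "f \<otimes>\<^bsub>group_ring G\<^esub> g \<in> carrier (group_ring G)"
proof -
  have "(\<lambda>(y, z). y \<otimes>\<^bsub>G\<^esub> z) ` (supp f \<times> supp g) \<subseteq> carrier G"
    using assms by (auto simp: carrier_group_ring intro: monoid.m_closed[OF assms(1)])
  moreover have "finite ((\<lambda>(y, z). y \<otimes>\<^bsub>G\<^esub> z) ` (supp f \<times> supp g))"
    using assms by (simp add: carrier_group_ring)
  ultimately show ?thesis
    using supp_mult_group_ring[of G f g] by (auto simp: carrier_group_ring intro: finite_subset)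
qed

lemma group_ring_add_closed:
  assumes "f \<in> carrier (group_ring G)" "g \<in> carrier (group_ring G)"
  shows "f \<oplus>\<^bsub>group_ring G\<^esub> g \<in> carrier (group_ring G)"
proof -
  have "supp (f \<oplus>\<^bsub>group_ring G\<^esub> g) \<subseteq> supp f \<union> supp g"
    by (auto simp: supp_def add_group_ring)
  then show ?thesis
    using assms by (auto simp: carrier_group_ring intro: finite_subset)
qed

lemma delta_mult_apply:
  fixes G (structure)
  assumes G: "group G" and g: "g \<in> carrier G" and f: "f \<in> carrier (group_ring G)"
  shows "(delta g \<otimes>\<^bsub>group_ring G\<^esub> f) x = (if x \<in> carrier G then f (inv\<^bsub>G\<^esub> g \<otimes>\<^bsub>G\<^esub> x) else 0)"
proof -
  interpret group G by (rule G)
  have fs: "supp f \<subseteq> carrier G"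
    using f by (simp add: carrier_group_ring)
  let ?I = "{(y, z). y \<in> supp (delta g) \<and> z \<in> supp f \<and> y \<otimes>\<^bsub>G\<^esub> z = x}"
  show ?thesis
  proof (cases "x \<in> carrier G")
    case True
    have "g \<otimes> z = x \<longleftrightarrow> z = inv g \<otimes> x" if "z \<in> carrier G" for z
      using inv_solve_left[OF _ g True] that by metis
    moreover have "inv g \<otimes> (g \<otimes> z) = z" if "z \<in> carrier G" for z
      using g that by (simp add: m_assoc[symmetric])
    ultimately have "?I = (if inv g \<otimes> x \<in> supp f then {(g, inv g \<otimes> x)} else {})"
      using fs by auto
    then show ?thesis
      using True by (auto simp: mult_group_ring delta_def supp_def)
  next
    case False
    then have "?I = {}"
      using fs g by auto
    then show ?thesis
      using False by (simp only: mult_group_ring sum.empty if_False)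
  qed
qed

lemma mult_delta_apply:
  fixes G (structure)
  assumes G: "group G" and g: "g \<in> carrier G" and f: "f \<in> carrier (group_ring G)"
  shows "(f \<otimes>\<^bsub>group_ring G\<^esub> delta g) x = (if x \<in> carrier G then f (x \<otimes>\<^bsub>G\<^esub> inv\<^bsub>G\<^esub> g) else 0)"
proof -
  interpret group G by (rule G)
  have fs: "supp f \<subseteq> carrier G"
    using f by (simp add: carrier_group_ring)
  let ?I = "{(y, z). y \<in> supp f \<and> z \<in> supp (delta g) \<and> y \<otimes>\<^bsub>G\<^esub> z = x}"
  show ?thesis
  proof (cases "x \<in> carrier G")
    case True
    have "y \<otimes> g = x \<longleftrightarrow> y = x \<otimes> inv g" if "y \<in> carrier G" for y
      using inv_solve_right[OF _ True g] that by metis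
    moreover have "(y \<otimes> g) \<otimes> inv g = y" if "y \<in> carrier G" for y
      using g that by (simp add: m_assoc)
    ultimately have "?I = (if x \<otimes> inv g \<in> supp f then {(x \<otimes> inv g, g)} else {})"
      using fs by auto
    then show ?thesis
      using True by (auto simp: mult_group_ring delta_def supp_def)
  next
    case False
    then have "?I = {}"
      using fs g by auto
    then show ?thesis
      using False by (simp only: mult_group_ring sum.empty if_False)
  qed
qed

lemma group_ring_one_mult:
  assumes G: "group G" and f: "f \<in> carrier (group_ring G)"
  shows "\<one>\<^bsub>group_ring G\<^esub> \<otimes>\<^bsub>group_ring G\<^esub> f = f"
proof
  interpret group G by (rule G)
  fix x
  show "(\<one>\<^bsub>group_ring G\<^esub> \<otimes>\<^bsub>group_ring G\<^esub> f) x = f x"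
    using delta_mult_apply[OF G one_closed f, of x] f
    by (auto simp: one_group_ring supp_def carrier_group_ring)
qed

lemma group_ring_zero_mult: "(\<lambda>x. 0) \<otimes>\<^bsub>group_ring G\<^esub> f = (\<lambda>x. 0)"
  by (simp add: mult_group_ring)

lemma carrier_QGamma1:
  "a \<in> carrier (QGamma1 m) \<longleftrightarrow> finite (supp a) \<and> supp a \<subseteq> S_car m \<times> UNIV"
  by (simp add: QGamma1_def carrier_group_ring)

lemma QGamma1_mult_closed:
  "a \<in> carrier (QGamma1 m) \<Longrightarrow> b \<in> carrier (QGamma1 m) \<Longrightarrow> a \<otimes>\<^bsub>QGamma1 m\<^esub> b \<in> carrier (QGamma1 m)"
  unfolding QGamma1_def by (rule group_ring_mult_closed[OF group.is_monoid[OF group_Gamma1]])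

lemma QGamma1_add_closed:
  "a \<in> carrier (QGamma1 m) \<Longrightarrow> b \<in> carrier (QGamma1 m) \<Longrightarrow> a \<oplus>\<^bsub>QGamma1 m\<^esub> b \<in> carrier (QGamma1 m)"
  unfolding QGamma1_def by (rule group_ring_add_closed)

lemma one_QGamma1: "\<one>\<^bsub>QGamma1 m\<^esub> = delta (0, 0)"
  by (simp add: QGamma1_def one_group_ring)

lemma delta_in_QGamma1: "s \<in> S_car m \<Longrightarrow> delta (s, n) \<in> carrier (QGamma1 m)"
  by (simp add: carrier_QGamma1)

section \<open>A faithful representation of \<open>\<rat>\<Gamma>\<^sub>1\<close>\<close>

lemma sum_fun_apply: "sum F A x = (\<Sum>i\<in>A. F i x)"
  by (induction A rule: infinite_finite_induct) auto

lemma plus_comp: "(f + g) \<circ> h = (f \<circ> h) + (g \<circ> h)"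
  by (simp add: fun_eq_iff)

lemma sum_comp: "sum F A \<circ> h = (\<Sum>i\<in>A. F i \<circ> h)"
  by (simp add: fun_eq_iff sum_fun_apply)

lemma (in additive) comp_plus: "f \<circ> (u + v) = (f \<circ> u) + (f \<circ> v)"
  by (simp add: fun_eq_iff add)

lemma (in additive) comp_sum: "f \<circ> sum U A = (\<Sum>i\<in>A. f \<circ> U i)"
  by (simp add: fun_eq_iff sum_fun_apply sum)

definition wshift :: "(int \<Rightarrow> 'a :: comm_ring_1) \<Rightarrow> int \<Rightarrow> (int \<Rightarrow> 'a) \<Rightarrow> int \<Rightarrow> 'a" where
  "wshift c n = (\<lambda>v j. c j * v (j - n))"

lemma wshift_apply: "wshift c n v j = c j * v (j - n)"
  by (simp add: wshift_def)

lemma wshift_comp: "wshift c n \<circ> wshift d k = wshift (\<lambda>j. c j * d (j - n)) (n + k)"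
  by (simp add: wshift_def fun_eq_iff algebra_simps)

lemma wshift_add_coeffs: "wshift c n + wshift d n = wshift (\<lambda>j. c j + d j) n"
  by (simp add: wshift_def fun_eq_iff algebra_simps)

lemma wshift_zero_coeffs: "wshift (\<lambda>j. 0) n = 0"
  by (simp add: wshift_def fun_eq_iff)

lemma wshift_sum_coeffs: "(\<Sum>i\<in>A. wshift (c i) n) = wshift (\<lambda>j. \<Sum>i\<in>A. c i j) n"
  by (induction A rule: infinite_finite_induct) (auto simp: wshift_zero_coeffs wshift_add_coeffs)

lemma wshift_uminus_coeffs: "- wshift c n = wshift (\<lambda>j. - c j) n"
  by (simp add: wshift_def fun_eq_iff)

lemma wshift_one: "wshift (\<lambda>j. 1) 0 = id"
  by (simp add: wshift_def fun_eq_iff)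

lemma additive_wshift: "additive (wshift c n)"
  by unfold_locales (simp add: wshift_def fun_eq_iff algebra_simps)

lemma wshift_coeffs_inj: "wshift c n = wshift d n \<Longrightarrow> c = d"
  by (drule fun_cong[of _ _ "\<lambda>j. 1"]) (simp add: wshift_def)

definition to_fract :: "'a :: idom \<Rightarrow> 'a fract" where
  "to_fract a = Fract a 1"

lemma to_fract_add: "to_fract (a + b) = to_fract a + to_fract b"
  by (simp add: to_fract_def)

lemma to_fract_mult: "to_fract (a * b) = to_fract a * to_fract b"
  by (simp add: to_fract_def)

lemma to_fract_uminus: "to_fract (- a) = - to_fract a"
  by (simp add: to_fract_def)

lemma to_fract_0: "to_fract 0 = 0"
  by (simp add: to_fract_def Zero_fract_def)

lemma to_fract_1: "to_fract 1 = 1"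
  by (simp add: to_fract_def One_fract_def)

lemma to_fract_eq_0_iff: "to_fract a = 0 \<longleftrightarrow> a = 0"
  by (simp add: to_fract_def Zero_fract_def eq_fract)

lemma to_fract_sum: "to_fract (sum F A) = (\<Sum>i\<in>A. to_fract (F i))"
  by (induction A rule: infinite_finite_induct) (auto simp: to_fract_0 to_fract_add)

type_synonym K = "(rat poly \<Rightarrow>\<^sub>0 rat) fract"
type_synonym Kop = "(int \<Rightarrow> K) \<Rightarrow> int \<Rightarrow> K"

definition mono_coeffs :: "nat \<Rightarrow> rat poly \<times> int \<Rightarrow> rat \<Rightarrow> int \<Rightarrow> K" where
  "mono_coeffs m g r = (\<lambda>j. to_fract (Poly_Mapping.single (tpow m j (fst g)) r))"

definition term_op :: "nat \<Rightarrow> rat poly \<times> int \<Rightarrow> rat \<Rightarrow> Kop" where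
  "term_op m g r = wshift (mono_coeffs m g r) (snd g)"

definition rep :: "nat \<Rightarrow> (rat poly \<times> int \<Rightarrow> rat) \<Rightarrow> Kop" where
  "rep m a = (\<Sum>g\<in>supp a. term_op m g (a g))"

lemma term_op_zero: "term_op m g 0 = 0"
  by (simp add: term_op_def mono_coeffs_def to_fract_0 wshift_zero_coeffs)

lemma term_op_add: "term_op m g (r + r') = term_op m g r + term_op m g r'"
  by (simp add: term_op_def mono_coeffs_def single_add to_fract_add wshift_add_coeffs)

lemma term_op_sum: "term_op m g (sum F A) = (\<Sum>i\<in>A. term_op m g (F i))"
  by (induction A rule: infinite_finite_induct) (auto simp: term_op_zero term_op_add)

lemma additive_term_op: "additive (term_op m g r)"
  by (simp add: term_op_def additive_wshift)

lemma term_op_mult: "term_op m g r \<circ> term_op m h r' = term_op m (g \<otimes>\<^bsub>Gamma1 m\<^esub> h) (r * r')"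
proof -
  obtain s1 n1 s2 n2 where gh: "g = (s1, n1)" "h = (s2, n2)"
    by fastforce
  have "tpow m j s1 + tpow m (j - n1) s2 = tpow m j (s1 + tpow m (- n1) s2)" for j
    by (simp add: tpow_add tpow_tpow)
  then show ?thesis
    by (simp add: gh term_op_def wshift_comp mono_coeffs_def to_fract_mult[symmetric] mult_single)
qed

lemma rep_eq_sum_superset:
  assumes "finite F" "supp a \<subseteq> F"
  shows "rep m a = (\<Sum>g\<in>F. term_op m g (a g))"
  unfolding rep_def by (rule sum.mono_neutral_left[OF assms]) (auto simp: supp_def term_op_zero)

lemma rep_zero: "rep m (\<lambda>x. 0) = 0"
  by (simp add: rep_def)

lemma rep_delta: "rep m (delta g) = term_op m g 1"
  unfolding rep_def supp_delta by (simp add: delta_def)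

lemma rep_one: "rep m \<one>\<^bsub>QGamma1 m\<^esub> = id"
  by (simp add: one_QGamma1 rep_delta term_op_def mono_coeffs_def tpow_zero to_fract_1 wshift_one)

lemma rep_add:
  assumes "a \<in> carrier (QGamma1 m)" "b \<in> carrier (QGamma1 m)"
  shows "rep m (a \<oplus>\<^bsub>QGamma1 m\<^esub> b) = rep m a + rep m b"
proof -
  let ?F = "supp a \<union> supp b"
  have fin: "finite ?F"
    using assms by (simp add: carrier_QGamma1)
  have "supp (a \<oplus>\<^bsub>QGamma1 m\<^esub> b) \<subseteq> ?F"
    by (auto simp: supp_def QGamma1_def add_group_ring)
  then have "rep m (a \<oplus>\<^bsub>QGamma1 m\<^esub> b) = (\<Sum>g\<in>?F. term_op m g (a g + b g))"
    using rep_eq_sum_superset[OF fin] by (simp add: QGamma1_def add_group_ring)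
  also have "\<dots> = (\<Sum>g\<in>?F. term_op m g (a g)) + (\<Sum>g\<in>?F. term_op m g (b g))"
    by (simp add: term_op_add sum.distrib)
  also have "\<dots> = rep m a + rep m b"
    using rep_eq_sum_superset[OF fin, of a] rep_eq_sum_superset[OF fin, of b] by simp
  finally show ?thesis .
qed

lemma rep_mult:
  assumes a: "a \<in> carrier (QGamma1 m)" and b: "b \<in> carrier (QGamma1 m)"
  shows "rep m (a \<otimes>\<^bsub>QGamma1 m\<^esub> b) = rep m a \<circ> rep m b"
proof -
  let ?P = "supp a \<times> supp b"
  let ?f = "\<lambda>(y, z). y \<otimes>\<^bsub>Gamma1 m\<^esub> z"
  let ?h = "\<lambda>p. term_op m (fst p \<otimes>\<^bsub>Gamma1 m\<^esub> snd p) (a (fst p) * b (snd p))"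
  have finP: "finite ?P"
    using a b by (simp add: carrier_QGamma1)
  have "rep m (a \<otimes>\<^bsub>QGamma1 m\<^esub> b) = (\<Sum>x\<in>?f ` ?P. term_op m x ((a \<otimes>\<^bsub>QGamma1 m\<^esub> b) x))"
    using finP supp_mult_group_ring[of "Gamma1 m" a b]
    by (intro rep_eq_sum_superset) (auto simp: QGamma1_def)
  also have "\<dots> = (\<Sum>x\<in>?f ` ?P. sum ?h {p \<in> ?P. ?f p = x})"
  proof (rule sum.cong[OF refl])
    fix x
    have "{(y, z). y \<in> supp a \<and> z \<in> supp b \<and> y \<otimes>\<^bsub>Gamma1 m\<^esub> z = x} = {p \<in> ?P. ?f p = x}"
      by auto
    then have "(a \<otimes>\<^bsub>QGamma1 m\<^esub> b) x = (\<Sum>p\<in>{p \<in> ?P. ?f p = x}. a (fst p) * b (snd p))"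
      unfolding QGamma1_def mult_group_ring by (simp add: case_prod_beta)
    then show "term_op m x ((a \<otimes>\<^bsub>QGamma1 m\<^esub> b) x) = sum ?h {p \<in> ?P. ?f p = x}"
      by (auto simp: term_op_sum case_prod_beta intro: sum.cong)
  qed
  also have "\<dots> = sum ?h ?P"
    by (rule sum.group[OF finP finite_imageI[OF finP]]) simp
  also have "\<dots> = (\<Sum>y\<in>supp a. \<Sum>z\<in>supp b. term_op m y (a y) \<circ> term_op m z (b z))"
    by (simp add: sum.cartesian_product case_prod_beta term_op_mult)
  also have "\<dots> = rep m a \<circ> rep m b"
    by (simp add: rep_def sum_comp additive.comp_sum[OF additive_term_op])
  finally show ?thesis .
qed

definition unit_seq :: "int \<Rightarrow> int \<Rightarrow> K" where
  "unit_seq k = (\<lambda>i. if i = k then 1 else 0)"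

text \<open>Evaluated on a unit vector, the component of degree \<open>d\<close> of \<open>a\<close> becomes an element of the group
  algebra in which distinct elements of \<open>S\<close> stay distinct, so no cancellation can occur.\<close>

lemma rep_unit_seq_neq_zero:
  assumes a: "a \<in> carrier (QGamma1 m)" and sd: "(s0, d) \<in> supp a"
  shows "rep m a (unit_seq k) (k + d) \<noteq> 0"
proof -
  have fa: "finite (supp a)" "supp a \<subseteq> S_car m \<times> UNIV"
    using a by (auto simp: carrier_QGamma1)
  define p where "p g = (if snd g = d then Poly_Mapping.single (tpow m (k + d) (fst g)) (a g) else 0)"
    for g
  have "rep m a (unit_seq k) (k + d) = (\<Sum>g\<in>supp a. term_op m g (a g) (unit_seq k) (k + d))"
    by (simp add: rep_def sum_fun_apply)
  also have "\<dots> = (\<Sum>g\<in>supp a. to_fract (p g))"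
    by (rule sum.cong[OF refl]) (auto simp: term_op_def wshift_apply unit_seq_def mono_coeffs_def to_fract_0 p_def)
  finally have e: "rep m a (unit_seq k) (k + d) = to_fract (\<Sum>g\<in>supp a. p g)"
    by (simp add: to_fract_sum)
  have "Poly_Mapping.lookup (p g) (tpow m (k + d) s0) = (if g = (s0, d) then a g else 0)"
    if g: "g \<in> supp a" for g
  proof -
    obtain s n where gs: "g = (s, n)"
      by fastforce
    have "s \<in> S_car m" "s0 \<in> S_car m"
      using g sd fa gs by auto
    then show ?thesis
      using tpow_inj[of s m s0 "k + d"] by (auto simp: gs p_def lookup_single when_def)
  qed
  then have "Poly_Mapping.lookup (\<Sum>g\<in>supp a. p g) (tpow m (k + d) s0) = a (s0, d)"
    using sd fa by (simp add: lookup_sum sum.delta cong: sum.cong)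
  then have "(\<Sum>g\<in>supp a. p g) \<noteq> 0"
    using sd by (auto simp: supp_def)
  then show ?thesis
    using e by (simp add: to_fract_eq_0_iff)
qed

lemma rep_eq_zero_imp:
  assumes "a \<in> carrier (QGamma1 m)" "rep m a = 0"
  shows "a = (\<lambda>x. 0)"
proof (rule ccontr)
  assume "a \<noteq> (\<lambda>x. 0)"
  then obtain s0 d where "a (s0, d) \<noteq> 0"
    by fastforce
  then have "(s0, d) \<in> supp a"
    by (simp add: supp_def)
  then show False
    using rep_unit_seq_neq_zero[OF assms(1), of s0 d 0] assms(2) by simp
qed

section \<open>The skew Laurent ring as a right ring of fractions\<close>

definition QS :: "nat \<Rightarrow> (rat poly \<times> int \<Rightarrow> rat) set" where
  "QS m = {x \<in> carrier (QGamma1 m). supp x \<subseteq> S_car m \<times> {0}}"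

lemma T1_eq: "T1 m = QS m - {\<lambda>x. 0}"
  by (auto simp: T1_def sub_group_ring_def derived_Gamma1 QS_def QGamma1_def simp del: carrier_Gamma1)

lemma T1_in_carrier: "t \<in> T1 m \<Longrightarrow> t \<in> carrier (QGamma1 m)"
  by (simp add: T1_eq QS_def)

definition diag :: "nat \<Rightarrow> (rat poly \<times> int \<Rightarrow> rat) \<Rightarrow> int \<Rightarrow> K" where
  "diag m x = (\<lambda>j. \<Sum>g\<in>supp x. mono_coeffs m g (x g) j)"

lemma rep_QS: "x \<in> QS m \<Longrightarrow> rep m x = wshift (diag m x) 0"
  unfolding rep_def diag_def term_op_def wshift_sum_coeffs[symmetric]
  by (rule sum.cong) (auto simp: QS_def)

lemma diag_zero: "diag m (\<lambda>x. 0) = (\<lambda>j. 0)"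
  by (simp add: diag_def)

lemma diag_neq_zero:
  assumes "x \<in> QS m" "x \<noteq> (\<lambda>x. 0)"
  shows "diag m x j \<noteq> 0"
proof -
  obtain s0 d where sd: "(s0, d) \<in> supp x"
    using assms(2) by (fastforce simp: supp_def)
  then have "d = 0"
    using assms(1) by (auto simp: QS_def)
  then show ?thesis
    using rep_unit_seq_neq_zero[of x m s0 d j] sd assms(1)
    by (simp add: QS_def rep_QS wshift_apply unit_seq_def)
qed

lemma in_QS_if_rep_eq_wshift:
  assumes a: "a \<in> carrier (QGamma1 m)" and rep: "rep m a = wshift c 0"
  shows "a \<in> QS m"
proof -
  have "d = 0" if "(s, d) \<in> supp a" for s d
  proof (rule ccontr)
    assume "d \<noteq> 0"
    then have "wshift c 0 (unit_seq 0) (0 + d) = 0"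
      by (simp add: wshift_apply unit_seq_def)
    then show False
      using rep_unit_seq_neq_zero[OF a that, of 0] rep by simp
  qed
  then show ?thesis
    using a by (fastforce simp: QS_def carrier_QGamma1)
qed

lemma one_in_QS: "\<one>\<^bsub>QGamma1 m\<^esub> \<in> QS m"
  by (simp add: one_QGamma1 QS_def delta_in_QGamma1 S_car_zero)

lemma diag_one: "diag m \<one>\<^bsub>QGamma1 m\<^esub> = (\<lambda>j. 1)"
  using rep_QS[OF one_in_QS] rep_one wshift_one wshift_coeffs_inj by metis

lemma one_in_T1: "\<one>\<^bsub>QGamma1 m\<^esub> \<in> T1 m"
proof -
  have "\<one>\<^bsub>QGamma1 m\<^esub> \<noteq> (\<lambda>x. 0)"
    using diag_one diag_zero by (metis zero_neq_one)
  then show ?thesis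
    by (simp add: T1_eq one_in_QS)
qed

lemma
  assumes "x \<in> QS m" "y \<in> QS m"
  shows QS_mult_closed: "x \<otimes>\<^bsub>QGamma1 m\<^esub> y \<in> QS m"
    and diag_mult: "diag m (x \<otimes>\<^bsub>QGamma1 m\<^esub> y) = (\<lambda>j. diag m x j * diag m y j)"
proof -
  have xy: "x \<in> carrier (QGamma1 m)" "y \<in> carrier (QGamma1 m)"
    using assms by (auto simp: QS_def)
  have rep: "rep m (x \<otimes>\<^bsub>QGamma1 m\<^esub> y) = wshift (\<lambda>j. diag m x j * diag m y j) 0"
    using assms by (simp add: rep_mult[OF xy] rep_QS wshift_comp)
  show xyQ: "x \<otimes>\<^bsub>QGamma1 m\<^esub> y \<in> QS m"
    by (rule in_QS_if_rep_eq_wshift[OF QGamma1_mult_closed[OF xy] rep])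
  show "diag m (x \<otimes>\<^bsub>QGamma1 m\<^esub> y) = (\<lambda>j. diag m x j * diag m y j)"
    using rep rep_QS[OF xyQ] wshift_coeffs_inj by metis
qed

lemma T1_mult_closed:
  assumes "t \<in> T1 m" "u \<in> T1 m"
  shows "t \<otimes>\<^bsub>QGamma1 m\<^esub> u \<in> T1 m"
proof -
  have "diag m (t \<otimes>\<^bsub>QGamma1 m\<^esub> u) 0 \<noteq> 0"
    using assms diag_neq_zero by (simp add: T1_eq diag_mult)
  then show ?thesis
    using assms QS_mult_closed diag_zero by (fastforce simp: T1_eq)
qed

lemma rep_delta_shift: "rep m (delta (0, n)) = wshift (\<lambda>j. 1) n"
  by (simp add: rep_delta term_op_def mono_coeffs_def tpow_zero to_fract_1)

text \<open>The witness is the conjugate \<open>\<mu>\<^sup>n x \<mu>\<^sup>-\<^sup>n\<close>.\<close>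

lemma QS_conj_shift:
  assumes x: "x \<in> QS m"
  obtains x' where "x' \<in> QS m" "diag m x' = (\<lambda>j. diag m x (j - n))"
    and "x \<noteq> (\<lambda>x. 0) \<Longrightarrow> x' \<noteq> (\<lambda>x. 0)"
proof -
  let ?x' = "delta (0, n) \<otimes>\<^bsub>QGamma1 m\<^esub> x \<otimes>\<^bsub>QGamma1 m\<^esub> delta (0, - n)"
  have c: "x \<in> carrier (QGamma1 m)" "delta (0, n) \<in> carrier (QGamma1 m)"
    "delta (0, - n) \<in> carrier (QGamma1 m)"
    using x by (auto simp: QS_def delta_in_QGamma1 S_car_zero)
  have rep: "rep m ?x' = wshift (\<lambda>j. diag m x (j - n)) 0"
    using x by (simp add: rep_mult c QGamma1_mult_closed rep_delta_shift rep_QS wshift_comp)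
  have q: "?x' \<in> QS m"
    by (rule in_QS_if_rep_eq_wshift[OF _ rep]) (simp add: c QGamma1_mult_closed)
  have d: "diag m ?x' = (\<lambda>j. diag m x (j - n))"
    using rep rep_QS[OF q] wshift_coeffs_inj by metis
  moreover have "?x' \<noteq> (\<lambda>x. 0)" if "x \<noteq> (\<lambda>x. 0)"
    using d diag_neq_zero[OF x that, of "0 - n"] diag_zero by (metis)
  ultimately show ?thesis
    using q that by blast
qed

lemma
  assumes "x \<in> QS m"
  shows QS_uminus: "(\<lambda>g. - x g) \<in> QS m"
    and diag_uminus: "diag m (\<lambda>g. - x g) = (\<lambda>j. - diag m x j)"
proof -
  have s: "supp (\<lambda>g. - x g) = supp x"
    by (simp add: supp_def)
  show "(\<lambda>g. - x g) \<in> QS m"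
    using assms by (simp add: QS_def carrier_QGamma1 s)
  show "diag m (\<lambda>g. - x g) = (\<lambda>j. - diag m x j)"
    by (simp add: diag_def s mono_coeffs_def single_uminus to_fract_uminus sum_negf)
qed

lemma
  assumes "s \<in> S_car m"
  shows QS_single: "(\<lambda>h. if h = (s, 0) then r else 0) \<in> QS m"
    and diag_single: "diag m (\<lambda>h. if h = (s, 0) then r else 0) = mono_coeffs m (s, n) r"
proof -
  have sp: "supp (\<lambda>h. if h = (s, 0) then r else 0) = (if r = 0 then {} else {(s, 0)})"
    by (auto simp: supp_def)
  show "(\<lambda>h. if h = (s, 0) then r else 0) \<in> QS m"
    using assms by (simp add: QS_def carrier_QGamma1 sp)
  show "diag m (\<lambda>h. if h = (s, 0) then r else 0) = mono_coeffs m (s, n) r"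
    by (auto simp: diag_def sp mono_coeffs_def to_fract_0)
qed

text \<open>The image of the quotient field \<open>\<K>\<^sub>1\<close> of \<open>\<rat>[S]\<close> among coefficient sequences.\<close>

definition frac_seqs :: "nat \<Rightarrow> (int \<Rightarrow> K) set" where
  "frac_seqs m = {(\<lambda>j. diag m x j / diag m y j) | x y. x \<in> QS m \<and> y \<in> T1 m}"

lemma one_in_frac_seqs: "(\<lambda>j. 1) \<in> frac_seqs m"
proof -
  have "(\<lambda>j. 1) = (\<lambda>j. diag m \<one>\<^bsub>QGamma1 m\<^esub> j / diag m \<one>\<^bsub>QGamma1 m\<^esub> j)"
    by (simp add: diag_one)
  then show ?thesis
    unfolding frac_seqs_def using one_in_QS one_in_T1 by blast
qed

lemma frac_seqs_mult_closed:
  assumes "c \<in> frac_seqs m" "d \<in> frac_seqs m"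
  shows "(\<lambda>j. c j * d j) \<in> frac_seqs m"
proof -
  obtain x y x' y' where "x \<in> QS m" "y \<in> T1 m" "c = (\<lambda>j. diag m x j / diag m y j)"
    and "x' \<in> QS m" "y' \<in> T1 m" "d = (\<lambda>j. diag m x' j / diag m y' j)"
    using assms unfolding frac_seqs_def by blast
  then show ?thesis
    unfolding frac_seqs_def using QS_mult_closed T1_mult_closed
    by (intro CollectI exI[of _ "x \<otimes>\<^bsub>QGamma1 m\<^esub> x'"] exI[of _ "y \<otimes>\<^bsub>QGamma1 m\<^esub> y'"])
      (auto simp: diag_mult T1_eq)
qed

lemma frac_seqs_shift_closed:
  assumes "c \<in> frac_seqs m"
  shows "(\<lambda>j. c (j - n)) \<in> frac_seqs m"
proof -
  obtain x y where xy: "x \<in> QS m" "y \<in> T1 m" "c = (\<lambda>j. diag m x j / diag m y j)"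
    using assms unfolding frac_seqs_def by blast
  obtain x' where "x' \<in> QS m" "diag m x' = (\<lambda>j. diag m x (j - n))"
    using QS_conj_shift[OF xy(1)] by blast
  moreover obtain y' where "y' \<in> T1 m" "diag m y' = (\<lambda>j. diag m y (j - n))"
    using QS_conj_shift[of y m n] xy(2) by (auto simp: T1_eq)
  moreover have "(\<lambda>j. c (j - n)) = (\<lambda>j. diag m x' j / diag m y' j)"
    using calculation xy(3) by simp
  ultimately show ?thesis
    unfolding frac_seqs_def by blast
qed

lemma frac_seqs_uminus_closed: "c \<in> frac_seqs m \<Longrightarrow> (\<lambda>j. - c j) \<in> frac_seqs m"
  unfolding frac_seqs_def using QS_uminus diag_uminus by fastforce

lemma mono_coeffs_in_frac_seqs:
  assumes "g \<in> carrier (Gamma1 m)"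
  shows "mono_coeffs m g r \<in> frac_seqs m"
proof -
  obtain s n where g: "g = (s, n)" "s \<in> S_car m"
    using assms by auto
  let ?x = "\<lambda>h. if h = (s, 0) then r else 0"
  have "mono_coeffs m g r = (\<lambda>j. diag m ?x j / diag m \<one>\<^bsub>QGamma1 m\<^esub> j)"
    using diag_single[OF g(2), of r n] by (simp add: g diag_one)
  then show ?thesis
    unfolding frac_seqs_def using QS_single[OF g(2)] one_in_T1 by blast
qed

lemma inverse_diag_in_frac_seqs:
  assumes "t \<in> T1 m"
  shows "(\<lambda>j. inverse (diag m t j)) \<in> frac_seqs m"
proof -
  have "(\<lambda>j. inverse (diag m t j)) = (\<lambda>j. diag m \<one>\<^bsub>QGamma1 m\<^esub> j / diag m t j)"
    by (simp add: diag_one divide_inverse)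
  then show ?thesis
    unfolding frac_seqs_def using one_in_QS assms by blast
qed

inductive_set skew_laurent :: "nat \<Rightarrow> Kop set" for m where
  zero: "0 \<in> skew_laurent m"
| wshift_add: "c \<in> frac_seqs m \<Longrightarrow> f \<in> skew_laurent m \<Longrightarrow> wshift c n + f \<in> skew_laurent m"

definition skew_laurent_ring :: "nat \<Rightarrow> Kop ring" where
  "skew_laurent_ring m = \<lparr>carrier = skew_laurent m, mult = (\<circ>), one = id, zero = 0, add = (+)\<rparr>"

lemma additive_skew_laurent: "f \<in> skew_laurent m \<Longrightarrow> additive f"
  by (induction rule: skew_laurent.induct) (auto simp: additive_def wshift_apply algebra_simps)

lemma skew_laurent_add_closed: "f \<in> skew_laurent m \<Longrightarrow> g \<in> skew_laurent m \<Longrightarrow> f + g \<in> skew_laurent m"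
  by (induction rule: skew_laurent.induct) (auto simp: add.assoc intro: skew_laurent.wshift_add)

lemma wshift_in_skew_laurent: "c \<in> frac_seqs m \<Longrightarrow> wshift c n \<in> skew_laurent m"
  using skew_laurent.wshift_add[OF _ skew_laurent.zero] by fastforce

lemma skew_laurent_sum_closed:
  "(\<And>i. i \<in> I \<Longrightarrow> F i \<in> skew_laurent m) \<Longrightarrow> sum F I \<in> skew_laurent m"
proof (induction I rule: infinite_finite_induct)
  case (infinite I)
  then show ?case
    by (metis sum.infinite skew_laurent.zero)
next
  case empty
  then show ?case
    by (metis sum.empty skew_laurent.zero)
next
  case (insert i I)
  then show ?case
    unfolding sum.insert[OF insert(1,2)] by (intro skew_laurent_add_closed) auto
qed

lemma skew_laurent_uminus_closed: "f \<in> skew_laurent m \<Longrightarrow> - f \<in> skew_laurent m"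
proof (induction rule: skew_laurent.induct)
  case zero
  then show ?case
    by (metis minus_zero skew_laurent.zero)
next
  case (wshift_add c f n)
  have "- (wshift c n + f) = wshift (\<lambda>j. - c j) n + - f"
    by (simp add: wshift_uminus_coeffs)
  then show ?case
    by (simp only:) (rule skew_laurent.wshift_add[OF frac_seqs_uminus_closed[OF wshift_add.hyps(1)] wshift_add.IH])
qed

lemma wshift_comp_skew_laurent:
  "g \<in> skew_laurent m \<Longrightarrow> c \<in> frac_seqs m \<Longrightarrow> wshift c n \<circ> g \<in> skew_laurent m"
proof (induction rule: skew_laurent.induct)
  case zero
  have "wshift c n \<circ> 0 = 0"
    by (simp add: fun_eq_iff wshift_apply)
  then show ?case
    by (metis skew_laurent.zero)
next
  case (wshift_add d f k)
  have eq: "wshift c n \<circ> (wshift d k + f) = wshift (\<lambda>j. c j * d (j - n)) (n + k) + (wshift c n \<circ> f)"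
    by (simp add: additive.comp_plus[OF additive_wshift] wshift_comp)
  have "wshift (\<lambda>j. c j * d (j - n)) (n + k) \<in> skew_laurent m"
    using wshift_add by (simp add: wshift_in_skew_laurent frac_seqs_mult_closed frac_seqs_shift_closed)
  then show ?case
    unfolding eq by (rule skew_laurent_add_closed[OF _ wshift_add.IH[OF wshift_add.prems]])
qed

lemma skew_laurent_comp_closed:
  "f \<in> skew_laurent m \<Longrightarrow> g \<in> skew_laurent m \<Longrightarrow> f \<circ> g \<in> skew_laurent m"
proof (induction rule: skew_laurent.induct)
  case zero
  have "0 \<circ> g = 0"
    by (simp add: fun_eq_iff)
  then show ?case
    by (metis skew_laurent.zero)
next
  case (wshift_add c f n)
  then show ?case
    unfolding plus_comp by (intro skew_laurent_add_closed wshift_comp_skew_laurent)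
qed

lemma zero_skew_laurent_ring: "\<zero>\<^bsub>skew_laurent_ring m\<^esub> = 0"
  by (simp add: skew_laurent_ring_def)

lemma ring_skew_laurent_ring: "ring (skew_laurent_ring m)"
proof (rule ringI)
  show "abelian_group (skew_laurent_ring m)"
    by (rule abelian_groupI)
      (auto simp: skew_laurent_ring_def skew_laurent_add_closed skew_laurent.zero add.assoc add.commute
        intro: bexI[of _ "- f" for f] skew_laurent_uminus_closed)
  have "id \<in> skew_laurent m"
    using wshift_in_skew_laurent[OF one_in_frac_seqs[of m], of 0] by (simp add: wshift_one)
  then show "monoid (skew_laurent_ring m)"
    by (intro monoidI) (auto simp: skew_laurent_ring_def skew_laurent_comp_closed comp_assoc)
qed (auto simp: skew_laurent_ring_def plus_comp additive.comp_plus additive_skew_laurent)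

lemma rep_in_skew_laurent: "a \<in> carrier (QGamma1 m) \<Longrightarrow> rep m a \<in> skew_laurent m"
  unfolding rep_def term_op_def
  by (intro skew_laurent_sum_closed wshift_in_skew_laurent mono_coeffs_in_frac_seqs)
    (auto simp: carrier_QGamma1)

lemma rep_ring_hom: "rep m \<in> ring_hom (QGamma1 m) (skew_laurent_ring m)"
  by (rule ring_hom_memI)
    (auto simp: skew_laurent_ring_def rep_in_skew_laurent rep_mult rep_add rep_one)

definition rep_inv :: "nat \<Rightarrow> (rat poly \<times> int \<Rightarrow> rat) \<Rightarrow> Kop" where
  "rep_inv m t = wshift (\<lambda>j. inverse (diag m t j)) 0"

lemma rep_inv_in_skew_laurent: "t \<in> T1 m \<Longrightarrow> rep_inv m t \<in> skew_laurent m"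
  unfolding rep_inv_def by (rule wshift_in_skew_laurent[OF inverse_diag_in_frac_seqs])

lemma rep_rep_inv:
  assumes "t \<in> T1 m"
  shows "rep m t \<circ> rep_inv m t = id" "rep_inv m t \<circ> rep m t = id"
  using assms diag_neq_zero[of t m]
  by (simp_all add: T1_eq rep_QS rep_inv_def wshift_comp wshift_one[symmetric])

lemma rep_T1_Units: "t \<in> T1 m \<Longrightarrow> rep m t \<in> Units (skew_laurent_ring m)"
  using rep_rep_inv rep_inv_in_skew_laurent rep_in_skew_laurent T1_in_carrier
  by (fastforce simp: Units_def skew_laurent_ring_def)

lemma inv_rep_T1: "t \<in> T1 m \<Longrightarrow> inv\<^bsub>skew_laurent_ring m\<^esub> (rep m t) = rep_inv m t"
  using monoid.inv_unique'[OF ring.is_monoid[OF ring_skew_laurent_ring], of "rep m t" m "rep_inv m t"]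
    rep_rep_inv rep_inv_in_skew_laurent rep_in_skew_laurent T1_in_carrier
  by (simp add: skew_laurent_ring_def)

lemma rep_inv_comp: "t \<in> T1 m \<Longrightarrow> u \<in> T1 m \<Longrightarrow> rep_inv m u \<circ> rep_inv m t = rep_inv m (t \<otimes>\<^bsub>QGamma1 m\<^esub> u)"
  by (simp add: rep_inv_def wshift_comp diag_mult T1_eq mult.commute)

text \<open>Common denominators exist because the denominators commute.\<close>

lemma rep_frac_add:
  assumes a: "a \<in> carrier (QGamma1 m)" and b: "b \<in> carrier (QGamma1 m)"
    and t: "t \<in> T1 m" and u: "u \<in> T1 m"
  shows "(rep m a \<circ> rep_inv m t) + (rep m b \<circ> rep_inv m u)
       = rep m ((a \<otimes>\<^bsub>QGamma1 m\<^esub> u) \<oplus>\<^bsub>QGamma1 m\<^esub> (b \<otimes>\<^bsub>QGamma1 m\<^esub> t)) \<circ> rep_inv m (t \<otimes>\<^bsub>QGamma1 m\<^esub> u)"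
proof -
  have tu: "t \<in> carrier (QGamma1 m)" "u \<in> carrier (QGamma1 m)"
    using t u by (simp_all add: T1_in_carrier)
  have "rep m a \<circ> rep_inv m t = rep m a \<circ> (rep m u \<circ> rep_inv m u) \<circ> rep_inv m t"
    using rep_rep_inv[OF u] by simp
  also have "\<dots> = rep m (a \<otimes>\<^bsub>QGamma1 m\<^esub> u) \<circ> rep_inv m (t \<otimes>\<^bsub>QGamma1 m\<^esub> u)"
    by (simp add: comp_assoc rep_mult[OF a tu(2)] rep_inv_comp[OF t u])
  finally have ea: "rep m a \<circ> rep_inv m t = rep m (a \<otimes>\<^bsub>QGamma1 m\<^esub> u) \<circ> rep_inv m (t \<otimes>\<^bsub>QGamma1 m\<^esub> u)" .
  have "rep m b \<circ> rep_inv m u = rep m b \<circ> (rep m t \<circ> rep_inv m t) \<circ> rep_inv m u"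
    using rep_rep_inv[OF t] by simp
  also have "\<dots> = rep m (b \<otimes>\<^bsub>QGamma1 m\<^esub> t) \<circ> rep_inv m (t \<otimes>\<^bsub>QGamma1 m\<^esub> u)"
    using rep_inv_comp[OF u t] rep_inv_comp[OF t u]
    by (simp add: comp_assoc rep_mult[OF b tu(1)] rep_inv_def wshift_comp mult.commute)
  finally have eb: "rep m b \<circ> rep_inv m u = rep m (b \<otimes>\<^bsub>QGamma1 m\<^esub> t) \<circ> rep_inv m (t \<otimes>\<^bsub>QGamma1 m\<^esub> u)" .
  show ?thesis
    unfolding ea eb rep_add[OF QGamma1_mult_closed[OF a tu(2)] QGamma1_mult_closed[OF b tu(1)]]
    by (rule plus_comp[symmetric])
qed

lemma skew_laurent_eq_frac:
  "f \<in> skew_laurent m \<Longrightarrow> \<exists>a\<in>carrier (QGamma1 m). \<exists>t\<in>T1 m. f = rep m a \<circ> rep_inv m t"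
proof (induction rule: skew_laurent.induct)
  case zero
  have "(0 :: Kop) = rep m (\<lambda>x. 0) \<circ> rep_inv m \<one>\<^bsub>QGamma1 m\<^esub>"
    by (simp add: rep_zero fun_eq_iff)
  moreover have "(\<lambda>x. 0) \<in> carrier (QGamma1 m)"
    by (simp add: carrier_QGamma1)
  ultimately show ?case
    using one_in_T1 by blast
next
  case (wshift_add c f n)
  obtain b u where bu: "b \<in> carrier (QGamma1 m)" "u \<in> T1 m" "f = rep m b \<circ> rep_inv m u"
    using wshift_add.IH by blast
  obtain x y where xy: "x \<in> QS m" "y \<in> T1 m" "c = (\<lambda>j. diag m x j / diag m y j)"
    using wshift_add.hyps(1) unfolding frac_seqs_def by blast
  obtain x' where x': "x' \<in> QS m" "diag m x' = (\<lambda>j. diag m x (j + n))"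
    using QS_conj_shift[OF xy(1), of "- n"] by auto
  obtain y' where y': "y' \<in> T1 m" "diag m y' = (\<lambda>j. diag m y (j + n))"
    using QS_conj_shift[of y m "- n"] xy(2) by (auto simp: T1_eq)
  let ?a = "delta (0, n) \<otimes>\<^bsub>QGamma1 m\<^esub> x'"
  have dx': "delta (0, n) \<in> carrier (QGamma1 m)" "x' \<in> carrier (QGamma1 m)"
    using x'(1) delta_in_QGamma1[OF S_car_zero] by (auto simp: QS_def)
  then have a: "?a \<in> carrier (QGamma1 m)"
    by (rule QGamma1_mult_closed)
  have "rep m ?a \<circ> rep_inv m y' = wshift c n"
    using x' y' xy(3)
    by (simp add: rep_mult[OF dx'] rep_delta_shift rep_QS rep_inv_def wshift_comp divide_inverse)
  then have "wshift c n + f = rep m ((?a \<otimes>\<^bsub>QGamma1 m\<^esub> u) \<oplus>\<^bsub>QGamma1 m\<^esub> (b \<otimes>\<^bsub>QGamma1 m\<^esub> y'))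
      \<circ> rep_inv m (y' \<otimes>\<^bsub>QGamma1 m\<^esub> u)"
    using rep_frac_add[OF a bu(1) y'(1) bu(2)] bu(3) by simp
  moreover have "(?a \<otimes>\<^bsub>QGamma1 m\<^esub> u) \<oplus>\<^bsub>QGamma1 m\<^esub> (b \<otimes>\<^bsub>QGamma1 m\<^esub> y') \<in> carrier (QGamma1 m)"
    by (rule QGamma1_add_closed[OF QGamma1_mult_closed[OF a T1_in_carrier[OF bu(2)]]
      QGamma1_mult_closed[OF bu(1) T1_in_carrier[OF y'(1)]]])
  ultimately show ?case
    using T1_mult_closed[OF y'(1) bu(2)] by blast
qed

lemma rep_eq_zero_iff:
  assumes a: "a \<in> carrier (QGamma1 m)"
  shows "rep m a = 0 \<longleftrightarrow> (\<exists>t\<in>T1 m. a \<otimes>\<^bsub>QGamma1 m\<^esub> t = \<zero>\<^bsub>QGamma1 m\<^esub>)"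
proof
  assume "rep m a = 0"
  then have "a \<otimes>\<^bsub>QGamma1 m\<^esub> \<one>\<^bsub>QGamma1 m\<^esub> = \<zero>\<^bsub>QGamma1 m\<^esub>"
    using rep_eq_zero_imp[OF a] by (simp add: QGamma1_def group_ring_zero_mult zero_group_ring)
  then show "\<exists>t\<in>T1 m. a \<otimes>\<^bsub>QGamma1 m\<^esub> t = \<zero>\<^bsub>QGamma1 m\<^esub>"
    using one_in_T1 by blast
next
  assume "\<exists>t\<in>T1 m. a \<otimes>\<^bsub>QGamma1 m\<^esub> t = \<zero>\<^bsub>QGamma1 m\<^esub>"
  then obtain t where t: "t \<in> T1 m" "a \<otimes>\<^bsub>QGamma1 m\<^esub> t = \<zero>\<^bsub>QGamma1 m\<^esub>"
    by blast
  then have "rep m a \<circ> rep m t = 0"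
    using rep_mult[OF a T1_in_carrier[OF t(1)]] rep_zero by (simp add: QGamma1_def zero_group_ring)
  then have "rep m a \<circ> rep m t \<circ> rep_inv m t = 0"
    by (simp add: fun_eq_iff)
  then show "rep m a = 0"
    using rep_rep_inv[OF t(1)] by (simp add: comp_assoc)
qed

lemma right_ring_of_fractions_skew_laurent_ring:
  "right_ring_of_fractions (QGamma1 m) (T1 m) (skew_laurent_ring m) (rep m)"
  unfolding right_ring_of_fractions_def
proof (intro conjI ballI)
  fix r
  assume "r \<in> carrier (skew_laurent_ring m)"
  then have "r \<in> skew_laurent m"
    by (simp add: skew_laurent_ring_def)
  then obtain a t where "a \<in> carrier (QGamma1 m)" "t \<in> T1 m" "r = rep m a \<circ> rep_inv m t"
    using skew_laurent_eq_frac by blast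
  moreover have "rep m a \<otimes>\<^bsub>skew_laurent_ring m\<^esub> inv\<^bsub>skew_laurent_ring m\<^esub> rep m t
      = rep m a \<circ> rep_inv m t"
    using \<open>t \<in> T1 m\<close> by (simp add: inv_rep_T1) (simp add: skew_laurent_ring_def)
  ultimately show "\<exists>a\<in>carrier (QGamma1 m). \<exists>t\<in>T1 m.
      r = rep m a \<otimes>\<^bsub>skew_laurent_ring m\<^esub> inv\<^bsub>skew_laurent_ring m\<^esub> rep m t"
    by metis
qed (simp_all add: ring_skew_laurent_ring rep_ring_hom rep_T1_Units rep_eq_zero_iff zero_skew_laurent_ring)

lemma ring_hom_Units:
  assumes R: "monoid R" and S: "monoid S" and h: "h \<in> ring_hom R S" and x: "x \<in> Units R"
  shows "h x \<in> Units S" "inv\<^bsub>S\<^esub> (h x) = h (inv\<^bsub>R\<^esub> x)"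
proof -
  have c: "x \<in> carrier R" "inv\<^bsub>R\<^esub> x \<in> carrier R"
    using x by (simp_all add: monoid.Units_closed[OF R] monoid.Units_inv_closed[OF R])
  then have "h x \<otimes>\<^bsub>S\<^esub> h (inv\<^bsub>R\<^esub> x) = \<one>\<^bsub>S\<^esub>" "h (inv\<^bsub>R\<^esub> x) \<otimes>\<^bsub>S\<^esub> h x = \<one>\<^bsub>S\<^esub>"
    using x h by (simp_all add: ring_hom_mult[symmetric] ring_hom_one monoid.Units_r_inv[OF R] monoid.Units_l_inv[OF R])
  moreover have "h x \<in> carrier S" "h (inv\<^bsub>R\<^esub> x) \<in> carrier S"
    using c h by (simp_all add: ring_hom_closed)
  ultimately show "h x \<in> Units S" "inv\<^bsub>S\<^esub> (h x) = h (inv\<^bsub>R\<^esub> x)"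
    using monoid.inv_unique'[OF S] by (auto simp: Units_def)
qed

lemma right_ring_of_fractions_image_ring:
  assumes rr: "right_ring_of_fractions A T R \<phi>" and inj: "inj_on e (carrier R)"
  shows "right_ring_of_fractions A T (image_ring e R) (e \<circ> \<phi>)"
proof -
  let ?R' = "image_ring e R"
  have R: "ring R" and ph: "\<phi> \<in> ring_hom A R" and U: "\<forall>t\<in>T. \<phi> t \<in> Units R"
    and frac: "\<forall>r\<in>carrier R. \<exists>a\<in>carrier A. \<exists>t\<in>T. r = \<phi> a \<otimes>\<^bsub>R\<^esub> inv\<^bsub>R\<^esub> (\<phi> t)"
    and ker: "\<forall>a\<in>carrier A. \<phi> a = \<zero>\<^bsub>R\<^esub> \<longleftrightarrow> (\<exists>t\<in>T. a \<otimes>\<^bsub>A\<^esub> t = \<zero>\<^bsub>A\<^esub>)"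
    using rr unfolding right_ring_of_fractions_def by auto
  have R': "ring ?R'"
    by (rule ring.inj_imp_image_ring_is_ring[OF R inj])
  have e: "e \<in> ring_hom R ?R'"
    using inj_imp_image_ring_iso[OF inj] by (simp add: ring_iso_def)
  have units: "e x \<in> Units ?R'" "inv\<^bsub>?R'\<^esub> (e x) = e (inv\<^bsub>R\<^esub> x)" if "x \<in> Units R" for x
    using ring_hom_Units[OF ring.is_monoid[OF R] ring.is_monoid[OF R'] e that] by simp_all
  show ?thesis
    unfolding right_ring_of_fractions_def
  proof (intro conjI ballI)
    show "e \<circ> \<phi> \<in> ring_hom A ?R'"
      by (rule ring_hom_trans[OF ph e])
  next
    fix r
    assume "r \<in> carrier ?R'"
    then obtain r0 where r0: "r0 \<in> carrier R" "r = e r0"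
      by (auto simp: image_ring_carrier)
    then obtain a t where at: "a \<in> carrier A" "t \<in> T" "r0 = \<phi> a \<otimes>\<^bsub>R\<^esub> inv\<^bsub>R\<^esub> (\<phi> t)"
      using frac by blast
    then have "r = e (\<phi> a) \<otimes>\<^bsub>?R'\<^esub> e (inv\<^bsub>R\<^esub> (\<phi> t))"
      using r0 U ring_hom_closed[OF ph] ring_hom_mult[OF e] monoid.Units_inv_closed[OF ring.is_monoid[OF R]]
      by simp
    then show "\<exists>a\<in>carrier A. \<exists>t\<in>T. r = (e \<circ> \<phi>) a \<otimes>\<^bsub>?R'\<^esub> inv\<^bsub>?R'\<^esub> ((e \<circ> \<phi>) t)"
      using at U units by auto
  next
    fix a
    assume a: "a \<in> carrier A"
    have "e (\<phi> a) = \<zero>\<^bsub>?R'\<^esub> \<longleftrightarrow> \<phi> a = \<zero>\<^bsub>R\<^esub>"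
      using inj_onD[OF inj] ring_hom_closed[OF ph a] ring.ring_simprules(2)[OF R]
      by (auto simp: image_ring_zero)
    then show "(e \<circ> \<phi>) a = \<zero>\<^bsub>?R'\<^esub> \<longleftrightarrow> (\<exists>t\<in>T. a \<otimes>\<^bsub>A\<^esub> t = \<zero>\<^bsub>A\<^esub>)"
      using ker a by simp
  qed (use R' U units in auto)
qed

text \<open>A fraction is encoded by the set of all its representations as \<open>a t\<^sup>-\<^sup>1\<close>.\<close>

definition encode_frac :: "nat \<Rightarrow> Kop \<Rightarrow> ((rat poly \<times> int \<Rightarrow> rat) \<times> (rat poly \<times> int \<Rightarrow> rat)) set" where
  "encode_frac m r = {(a, t). a \<in> carrier (QGamma1 m) \<and> t \<in> T1 m \<and> r = rep m a \<circ> rep_inv m t}"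

lemma inj_on_encode_frac: "inj_on (encode_frac m) (carrier (skew_laurent_ring m))"
proof (rule inj_onI)
  fix r r'
  assume r: "r \<in> carrier (skew_laurent_ring m)" and eq: "encode_frac m r = encode_frac m r'"
  have "r \<in> skew_laurent m"
    using r by (simp add: skew_laurent_ring_def)
  then obtain a t where "a \<in> carrier (QGamma1 m)" "t \<in> T1 m" "r = rep m a \<circ> rep_inv m t"
    using skew_laurent_eq_frac by blast
  then show "r = r'"
    using eq by (auto simp: encode_frac_def set_eq_iff)
qed

lemma exists_right_ring_of_fractions_QGamma1:
  "\<exists>(R :: (((rat poly \<times> int \<Rightarrow> rat) \<times> (rat poly \<times> int \<Rightarrow> rat)) set) ring) \<phi>.
     right_ring_of_fractions (QGamma1 m) (T1 m) R \<phi>"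
  using right_ring_of_fractions_image_ring[OF right_ring_of_fractions_skew_laurent_ring inj_on_encode_frac]
  by blast

section \<open>Simplicity\<close>

lemma finite_translation_closed_imp_zero:
  fixes F :: "'a :: {idom, ring_char_0} set"
  assumes fin: "finite F" and ne: "F \<noteq> {}" and closed: "\<And>s. s \<in> F \<Longrightarrow> s + h \<in> F"
  shows "h = 0"
proof -
  have inj: "inj_on (\<lambda>s. s + h) F"
    by (simp add: inj_on_def)
  have "(\<lambda>s. s + h) ` F = F"
    using endo_inj_surj[OF fin _ inj] closed by blast
  then have "sum (\<lambda>s. s) F = sum (\<lambda>s. s + h) F"
    using sum.reindex[OF inj, of "\<lambda>s. s"] by simp
  then have "of_nat (card F) * h = 0"
    by (simp add: sum.distrib)
  then show "h = 0"
    using fin ne by simp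
qed

definition degrees :: "('s \<times> int \<Rightarrow> rat) \<Rightarrow> int set" where
  "degrees a = snd ` supp a"

lemma finite_degrees: "a \<in> carrier (QGamma1 m) \<Longrightarrow> finite (degrees a)"
  by (simp add: degrees_def carrier_QGamma1)

lemma in_T1_if_degrees_subset_0:
  assumes "a \<in> carrier (QGamma1 m)" "a \<noteq> (\<lambda>x. 0)" "degrees a \<subseteq> {0}"
  shows "a \<in> T1 m"
  using assms by (force simp: T1_eq QS_def carrier_QGamma1 degrees_def)

lemma mult_delta_shift_apply:
  assumes "a \<in> carrier (QGamma1 m)"
  shows "(a \<otimes>\<^bsub>QGamma1 m\<^esub> delta (0, - k)) (s, n) = (if s \<in> S_car m then a (s, n + k) else 0)"
  using mult_delta_apply[OF group_Gamma1[of m], of "(0, - k)" a "(s, n)"] assms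
  by (simp add: QGamma1_def inv_Gamma1 S_car_zero tpow_zero)

lemma supp_mult_delta_shift:
  assumes "a \<in> carrier (QGamma1 m)"
  shows "(s, n) \<in> supp (a \<otimes>\<^bsub>QGamma1 m\<^esub> delta (0, - k)) \<longleftrightarrow> (s, n + k) \<in> supp a"
  using assms by (auto simp: mult_delta_shift_apply supp_def carrier_QGamma1)

lemma degrees_mult_delta_shift:
  assumes "a \<in> carrier (QGamma1 m)"
  shows "degrees (a \<otimes>\<^bsub>QGamma1 m\<^esub> delta (0, - k)) = (\<lambda>d. d - k) ` degrees a"
proof -
  have "supp (a \<otimes>\<^bsub>QGamma1 m\<^esub> delta (0, - k)) = (\<lambda>(s, n). (s, n - k)) ` supp a"
  proof (rule Set.set_eqI)
    fix x :: "rat poly \<times> int"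
    obtain s n where x: "x = (s, n)"
      by fastforce
    show "x \<in> supp (a \<otimes>\<^bsub>QGamma1 m\<^esub> delta (0, - k)) \<longleftrightarrow> x \<in> (\<lambda>(s, n). (s, n - k)) ` supp a"
      by (auto simp: x supp_mult_delta_shift[OF assms] image_iff intro!: bexI[of _ "(s, n + k)"])
  qed
  then show ?thesis
    by (simp add: degrees_def image_image case_prod_beta)
qed

context
  fixes m :: nat
  assumes m_pos: "0 < m"
begin

lemma conj_delta_one_apply:
  assumes a: "a \<in> carrier (QGamma1 m)"
  shows "(delta (1, 0) \<otimes>\<^bsub>QGamma1 m\<^esub> a \<otimes>\<^bsub>QGamma1 m\<^esub> delta (-1, 0)) (s, n)
       = (if s \<in> S_car m then a (s - 1 + tpow m (- n) 1, n) else 0)"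
proof -
  have one: "(1 :: rat poly) \<in> S_car m" "(-1 :: rat poly) \<in> S_car m"
    using S_car_one[OF m_pos] S_car_uminus by blast+
  have da: "delta (1, 0) \<otimes>\<^bsub>QGamma1 m\<^esub> a \<in> carrier (QGamma1 m)"
    using QGamma1_mult_closed[OF delta_in_QGamma1[OF one(1)] a] .
  have "s \<in> S_car m \<Longrightarrow> s + tpow m (- n) 1 \<in> S_car m"
    by (simp add: S_car_add tpow_in_S_car)
  then show ?thesis
    using mult_delta_apply[OF group_Gamma1[of m], of "(-1, 0)" _ "(s, n)"] da[unfolded QGamma1_def]
      delta_mult_apply[OF group_Gamma1[of m], of "(1, 0)" a] a[unfolded QGamma1_def] one
    by (simp add: QGamma1_def inv_Gamma1 tpow_0 tpow_uminus algebra_simps)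
qed

definition conj_diff :: "(rat poly \<times> int \<Rightarrow> rat) \<Rightarrow> rat poly \<times> int \<Rightarrow> rat" where
  "conj_diff a = (\<lambda>x. (delta (1, 0) \<otimes>\<^bsub>QGamma1 m\<^esub> a \<otimes>\<^bsub>QGamma1 m\<^esub> delta (-1, 0)) x - a x)"

lemma conj_diff_apply:
  assumes "a \<in> carrier (QGamma1 m)"
  shows "conj_diff a (s, n) = (if s \<in> S_car m then a (s - 1 + tpow m (- n) 1, n) - a (s, n) else 0)"
  using assms by (auto simp: conj_diff_def conj_delta_one_apply carrier_QGamma1 supp_def)

lemma conj_diff_in_carrier:
  assumes "a \<in> carrier (QGamma1 m)"
  shows "conj_diff a \<in> carrier (QGamma1 m)"
proof -
  have d: "delta (1, 0) \<in> carrier (QGamma1 m)" "delta (-1, 0) \<in> carrier (QGamma1 m)"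
    using S_car_one[OF m_pos] S_car_uminus by (auto simp: delta_in_QGamma1)
  let ?b = "delta (1, 0) \<otimes>\<^bsub>QGamma1 m\<^esub> a \<otimes>\<^bsub>QGamma1 m\<^esub> delta (-1, 0)"
  have "?b \<in> carrier (QGamma1 m)"
    using assms d by (simp add: QGamma1_mult_closed)
  moreover have "supp (conj_diff a) \<subseteq> supp ?b \<union> supp a"
    by (auto simp: conj_diff_def supp_def)
  ultimately show ?thesis
    using assms by (auto simp: carrier_QGamma1 intro: finite_subset)
qed

lemma degrees_conj_diff:
  assumes a: "a \<in> carrier (QGamma1 m)"
  shows "degrees (conj_diff a) \<subseteq> degrees a - {0}"
proof
  fix n
  assume "n \<in> degrees (conj_diff a)"
  then obtain s where "conj_diff a (s, n) \<noteq> 0"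
    by (auto simp: degrees_def supp_def)
  then have "s \<in> S_car m" "a (s - 1 + tpow m (- n) 1, n) \<noteq> a (s, n)"
    by (auto simp: conj_diff_apply[OF a] split: if_splits)
  moreover have "tpow m 0 1 = 1"
    by (rule tpow_0[OF S_car_one[OF m_pos]])
  ultimately show "n \<in> degrees a - {0}"
    by (cases "a (s, n) = 0") (force simp: degrees_def supp_def)+
qed

lemma degrees_subset_0_if_conj_diff_eq_0:
  assumes a: "a \<in> carrier (QGamma1 m)" and cd: "conj_diff a = (\<lambda>x. 0)"
  shows "degrees a \<subseteq> {0}"
proof
  fix n
  assume n: "n \<in> degrees a"
  define F where "F = {s. (s, n) \<in> supp a}"
  have "finite F"
    using a finite_imageI[of "supp a" fst] by (auto simp: carrier_QGamma1 F_def intro: finite_subset)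
  moreover have "F \<noteq> {}"
    using n by (force simp: F_def degrees_def)
  moreover have "s + (tpow m (- n) 1 - 1) \<in> F" if "s \<in> F" for s
  proof -
    have "s \<in> S_car m"
      using that a by (auto simp: F_def carrier_QGamma1)
    then show ?thesis
      using that fun_cong[OF cd, of "(s, n)"] by (simp add: F_def supp_def conj_diff_apply[OF a] algebra_simps)
  qed
  ultimately have "tpow m (- n) 1 - 1 = 0"
    by (rule finite_translation_closed_imp_zero)
  then show "n \<in> {0}"
    using tpow_one_neq_one[OF m_pos, of "- n"] by auto
qed

end

lemma right_ring_of_fractions_ideal_contains_image:
  assumes rr: "right_ring_of_fractions A T R \<phi>" and I: "ideal I R" "I \<noteq> {\<zero>\<^bsub>R\<^esub>}"
  obtains a where "a \<in> carrier A" "\<phi> a \<in> I" "\<phi> a \<noteq> \<zero>\<^bsub>R\<^esub>"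
proof -
  interpret R: ring R
    using rr by (simp add: right_ring_of_fractions_def)
  interpret I: ideal I R
    by (rule I(1))
  obtain r where r: "r \<in> I" "r \<noteq> \<zero>\<^bsub>R\<^esub>"
    using I(2) I.zero_closed by blast
  then obtain a t where at: "a \<in> carrier A" "t \<in> T" "r = \<phi> a \<otimes>\<^bsub>R\<^esub> inv\<^bsub>R\<^esub> (\<phi> t)"
    using rr I.a_subset by (force simp: right_ring_of_fractions_def)
  have u: "\<phi> t \<in> Units R" and pa: "\<phi> a \<in> carrier R"
    using rr at by (auto simp: right_ring_of_fractions_def ring_hom_closed)
  then have "\<phi> a = r \<otimes>\<^bsub>R\<^esub> \<phi> t"
    by (simp add: at(3) R.m_assoc R.Units_closed R.Units_inv_closed)
  then have "\<phi> a \<in> I"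
    using I.I_r_closed[OF r(1) R.Units_closed[OF u]] by simp
  moreover have "\<phi> a \<noteq> \<zero>\<^bsub>R\<^esub>"
    using r(2) u by (auto simp: at(3) R.Units_inv_closed)
  ultimately show ?thesis
    using at(1) that by blast
qed

context
  fixes m :: nat and R :: "('r, 'd) ring_scheme" and \<phi>
  assumes m_pos: "0 < m" and rrof: "right_ring_of_fractions (QGamma1 m) (T1 m) R \<phi>"
begin

lemma ring_R: "ring R"
  and hom_\<phi>: "\<phi> \<in> ring_hom (QGamma1 m) R"
  and T1_Units: "t \<in> T1 m \<Longrightarrow> \<phi> t \<in> Units R"
  and image_eq_zero_iff: "a \<in> carrier (QGamma1 m) \<Longrightarrow> \<phi> a = \<zero>\<^bsub>R\<^esub> \<longleftrightarrow> (\<exists>t\<in>T1 m. a \<otimes>\<^bsub>QGamma1 m\<^esub> t = \<zero>\<^bsub>QGamma1 m\<^esub>)"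
  using rrof by (simp_all add: right_ring_of_fractions_def)

lemma image_zero: "\<phi> (\<lambda>x. 0) = \<zero>\<^bsub>R\<^esub>"
proof -
  have "(\<lambda>x. 0) \<otimes>\<^bsub>QGamma1 m\<^esub> \<one>\<^bsub>QGamma1 m\<^esub> = \<zero>\<^bsub>QGamma1 m\<^esub>"
    by (simp add: QGamma1_def group_ring_zero_mult zero_group_ring)
  then show ?thesis
    using image_eq_zero_iff[of "\<lambda>x. 0"] one_in_T1[of m] by (auto simp: carrier_QGamma1)
qed

lemma zero_neq_one_R: "\<zero>\<^bsub>R\<^esub> \<noteq> \<one>\<^bsub>R\<^esub>"
proof
  assume "\<zero>\<^bsub>R\<^esub> = \<one>\<^bsub>R\<^esub>"
  then have "\<phi> \<one>\<^bsub>QGamma1 m\<^esub> = \<zero>\<^bsub>R\<^esub>"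
    using ring_hom_one[OF hom_\<phi>] by simp
  then obtain t where "t \<in> T1 m" "\<one>\<^bsub>QGamma1 m\<^esub> \<otimes>\<^bsub>QGamma1 m\<^esub> t = \<zero>\<^bsub>QGamma1 m\<^esub>"
    using image_eq_zero_iff one_in_QS[of m] by (auto simp: QS_def)
  then show False
    using group_ring_one_mult[OF group_Gamma1 T1_in_carrier[unfolded QGamma1_def]]
    by (simp add: QGamma1_def zero_group_ring T1_eq)
qed

lemma
  assumes I: "ideal I R" and a: "a \<in> carrier (QGamma1 m)" "\<phi> a \<in> I"
    and b: "b \<in> carrier (QGamma1 m)"
  shows image_mult_left_mem: "\<phi> (b \<otimes>\<^bsub>QGamma1 m\<^esub> a) \<in> I"
    and image_mult_right_mem: "\<phi> (a \<otimes>\<^bsub>QGamma1 m\<^esub> b) \<in> I"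
  using ideal.I_l_closed[OF I] ideal.I_r_closed[OF I] ring_hom_mult[OF hom_\<phi>] ring_hom_closed[OF hom_\<phi>]
    a b by simp_all

lemma image_conj_diff_mem:
  assumes I: "ideal I R" and a: "a \<in> carrier (QGamma1 m)" "\<phi> a \<in> I"
  shows "\<phi> (conj_diff m a) \<in> I"
proof -
  interpret I: additive_subgroup I R
    using I by (rule ideal.axioms(1))
  let ?b = "delta (1, 0) \<otimes>\<^bsub>QGamma1 m\<^esub> a \<otimes>\<^bsub>QGamma1 m\<^esub> delta (-1, 0)"
  have d: "delta (1, 0) \<in> carrier (QGamma1 m)" "delta (-1, 0) \<in> carrier (QGamma1 m)"
    using S_car_one[OF m_pos] S_car_uminus by (auto simp: delta_in_QGamma1)
  have b: "?b \<in> carrier (QGamma1 m)" "\<phi> ?b \<in> I"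
    using a d by (simp_all add: QGamma1_mult_closed image_mult_left_mem image_mult_right_mem I)
  have c: "conj_diff m a \<in> carrier (QGamma1 m)"
    by (rule conj_diff_in_carrier[OF m_pos a(1)])
  have "?b = conj_diff m a \<oplus>\<^bsub>QGamma1 m\<^esub> a"
    by (simp add: conj_diff_def[OF m_pos] QGamma1_def add_group_ring)
  then have "\<phi> ?b = \<phi> (conj_diff m a) \<oplus>\<^bsub>R\<^esub> \<phi> a"
    using ring_hom_add[OF hom_\<phi> c a(1)] by simp
  then have "\<phi> (conj_diff m a) = \<phi> ?b \<ominus>\<^bsub>R\<^esub> \<phi> a"
    using ring_hom_closed[OF hom_\<phi>] c a(1) by (simp add: ring.ring_simprules ring_R a_minus_def)
  then show ?thesis
    using I.a_closed[OF b(2) I.a_inv_closed[OF a(2)]] by (simp add: a_minus_def)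
qed

lemma ideal_eq_carrier_if_T1_image_mem:
  assumes I: "ideal I R" and t: "t \<in> T1 m" "\<phi> t \<in> I"
  shows "I = carrier R"
proof -
  have u: "\<phi> t \<in> Units R"
    by (rule T1_Units[OF t(1)])
  then have "\<phi> t \<otimes>\<^bsub>R\<^esub> inv\<^bsub>R\<^esub> (\<phi> t) \<in> I"
    using ideal.I_r_closed[OF I t(2)] monoid.Units_inv_closed[OF ring.is_monoid[OF ring_R]] by blast
  then have "\<one>\<^bsub>R\<^esub> \<in> I"
    using monoid.Units_r_inv[OF ring.is_monoid[OF ring_R] u] by simp
  then show ?thesis
    by (rule ideal.one_imp_carrier[OF I])
qed

lemma ideal_eq_carrier_if_image_mem:
  assumes I: "ideal I R"
  shows "a \<in> carrier (QGamma1 m) \<Longrightarrow> \<phi> a \<in> I \<Longrightarrow> a \<noteq> (\<lambda>x. 0) \<Longrightarrow> I = carrier R"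
proof (induction "card (degrees a)" arbitrary: a rule: less_induct)
  case less
  obtain s0 n0 where sn0: "(s0, n0) \<in> supp a"
    using less.prems(3) by (fastforce simp: supp_def)
  define b where "b = a \<otimes>\<^bsub>QGamma1 m\<^esub> delta (0, - n0)"
  have b: "b \<in> carrier (QGamma1 m)" "\<phi> b \<in> I"
    using less.prems(1,2) delta_in_QGamma1[OF S_car_zero]
    by (simp_all add: b_def QGamma1_mult_closed image_mult_right_mem I)
  have "(s0, 0) \<in> supp b"
    using sn0 less.prems(1) by (simp add: b_def supp_mult_delta_shift)
  then have b0: "0 \<in> degrees b" "b \<noteq> (\<lambda>x. 0)"
    by (force simp: degrees_def)+
  have card_b: "card (degrees b) = card (degrees a)"
    using less.prems(1) by (simp add: b_def degrees_mult_delta_shift card_image)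
  show "I = carrier R"
  proof (cases "conj_diff m b = (\<lambda>x. 0)")
    case True
    then have "b \<in> T1 m"
      using degrees_subset_0_if_conj_diff_eq_0[OF m_pos b(1)] b(1) b0(2)
      by (simp add: in_T1_if_degrees_subset_0)
    then show ?thesis
      using ideal_eq_carrier_if_T1_image_mem[OF I] b(2) by blast
  next
    case False
    have "degrees (conj_diff m b) \<subset> degrees b"
      using degrees_conj_diff[OF m_pos b(1)] b0(1) by blast
    then have "card (degrees (conj_diff m b)) < card (degrees a)"
      using psubset_card_mono[OF finite_degrees[OF b(1)]] card_b by simp
    moreover have "conj_diff m b \<in> carrier (QGamma1 m)"
      by (rule conj_diff_in_carrier[OF m_pos b(1)])
    ultimately show ?thesis
      using less.hyps image_conj_diff_mem[OF I b] False by blast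
  qed
qed

lemma simple_ring_R: "simple_ring R"
proof -
  have "I = {\<zero>\<^bsub>R\<^esub>} \<or> I = carrier R" if I: "ideal I R" for I
  proof (cases "I = {\<zero>\<^bsub>R\<^esub>}")
    case False
    then obtain a where "a \<in> carrier (QGamma1 m)" "\<phi> a \<in> I" "\<phi> a \<noteq> \<zero>\<^bsub>R\<^esub>"
      using right_ring_of_fractions_ideal_contains_image[OF rrof I] by blast
    then show ?thesis
      using ideal_eq_carrier_if_image_mem[OF I] image_zero by blast
  qed simp
  then show ?thesis
    unfolding simple_ring_def using ring_R zero_neq_one_R by blast
qed

end

theorem proposition4p2:
  fixes m :: nat
  assumes "0 < m"
  shows "(\<exists>(R :: (((rat poly \<times> int \<Rightarrow> rat) \<times> (rat poly \<times> int \<Rightarrow> rat)) set) ring) \<phi>.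
            right_ring_of_fractions (QGamma1 m) (T1 m) R \<phi>)
       \<and> (\<forall>(R :: ('r, 'd) ring_scheme) \<phi>.
            right_ring_of_fractions (QGamma1 m) (T1 m) R \<phi> \<longrightarrow> simple_ring R)"
  using exists_right_ring_of_fractions_QGamma1 simple_ring_R[OF assms] by blast

end
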